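(* Let $G$ be a finite group and let $\underline{\mathcal{F}}$ be an indexing system for $G$. Let $\mathbf{O}(\underline{\mathcal{F}})$ be the set of exponents whose $H$-th set consists of the nontrivial orbits $H/K\in\underline{\mathcal{F}}$ (i.e. $K\subsetneq H$), each with some chosen ordering. Then the class of admissible sets of the operad $\mathcal{SM}_{\mathbf{O}(\underline{\mathcal{F}})}$ is $\underline{\mathcal{F}}$.
   Context: A set of exponents $\mathcal{N}=(\mathcal{N}(H))_{H\subseteq G}$: for each subgroup $H$ a set of finite $H$-sets $T$ with chosen orderings $\{1,\dots,|T|\}\cong T$; $\sigma:H\to\Sigma_{|T|}$ the permutation representation and $\Gamma_T=\{(h,\sigma(h))\}\subseteq G\times\Sigma_{|T|}$. With $\mathbb{F}$ the free operad functor on symmetric sequences of $G$-sets and $\widetilde{X}$ the chaotic category on a set $X$ (one morphism between any two objects, applied levelwise), $\mathcal{SM}_{\mathcal{N}}=\widetilde{\mathbb{F}(S_{\mathcal{N}})}$ where $S_{\mathcal{N}}=(G\times\Sigma_0)/\Gamma_\varnothing\sqcup(G\times\Sigma_2)/\Gamma_{**}\sqcup\coprod_{T\in\mathcal{N}}(G\times\Sigma_{|T|})/\Gamma_T$ ($\varnothing$, $**$ trivial). A finite $H$-set $T$ with $|T|=n$ is admissible for an operad $\mathscr{O}$ in $G$-categories if $\mathscr{O}(n)^{\Gamma_T}\neq\varnothing$. An indexing system (Blumberg–Hill) is a family of finite $H$-sets for all $H\subseteq G$ containing trivial actions, closed under isomorphism, restriction, conjugation, subobjects, finite coproducts and products,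 and self-induction. *)

theory Defs
  imports "HOL-Algebra.Group" "HOL-Combinatorics.Permutations"
begin

text \<open>A finite H-set T with a chosen ordering {1..|T|} = T is encoded as a pair (n, a):
  the underlying set is {0..<n} and a h is the permutation by which h in H acts
  (only the values a h i for h in H and i < n matter).\<close>

definition fin_hset :: "'g monoid \<Rightarrow> 'g set \<Rightarrow> nat \<Rightarrow> ('g \<Rightarrow> nat \<Rightarrow> nat) \<Rightarrow> bool" where
  "fin_hset G H n a \<longleftrightarrow> subgroup H G
     \<and> (\<forall>h\<in>H. \<forall>i<n. a h i < n)
     \<and> (\<forall>i<n. a \<one>\<^bsub>G\<^esub> i = i)
     \<and> (\<forall>h\<in>H. \<forall>k\<in>H. \<forall>i<n. a (h \<otimes>\<^bsub>G\<^esub> k) i = a h (a k i))"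

definition equivariant :: "'g set \<Rightarrow> nat \<Rightarrow> ('g \<Rightarrow> nat \<Rightarrow> nat) \<Rightarrow> ('g \<Rightarrow> nat \<Rightarrow> nat) \<Rightarrow> (nat \<Rightarrow> nat) \<Rightarrow> bool" where
  "equivariant H m b a f \<longleftrightarrow> (\<forall>h\<in>H. \<forall>i<m. f (b h i) = a h (f i))"

text \<open>(n, a) is (an ordering of) the orbit H/K: transitive, with a point (the coset eK)
  whose stabiliser is exactly K.\<close>
definition is_orbit :: "'g monoid \<Rightarrow> 'g set \<Rightarrow> 'g set \<Rightarrow> nat \<Rightarrow> ('g \<Rightarrow> nat \<Rightarrow> nat) \<Rightarrow> bool" where
  "is_orbit G H K n a \<longleftrightarrow> fin_hset G H n a \<and>
     (\<exists>i0<n. {h \<in> H. a h i0 = i0} = K \<and> (\<forall>j<n. \<exists>h\<in>H. a h i0 = j))"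

definition indexing_system :: "'g monoid \<Rightarrow> ('g set \<Rightarrow> nat \<Rightarrow> ('g \<Rightarrow> nat \<Rightarrow> nat) \<Rightarrow> bool) \<Rightarrow> bool" where
  "indexing_system G F \<longleftrightarrow>
     \<comment> \<open>consists of finite H-sets for subgroups H\<close>
     (\<forall>H n a. F H n a \<longrightarrow> fin_hset G H n a)
     \<comment> \<open>contains trivial actions\<close>
   \<and> (\<forall>H n. subgroup H G \<longrightarrow> F H n (\<lambda>h i. i))
     \<comment> \<open>closed under isomorphism\<close>
   \<and> (\<forall>H n a b f. F H n a \<longrightarrow> fin_hset G H n b \<longrightarrow> bij_betw f {..<n} {..<n}
        \<longrightarrow> equivariant H n a b f \<longrightarrow> F H n b)
     \<comment> \<open>closed under restriction\<close>
   \<and> (\<forall>H K n a. F H n a \<longrightarrow> subgroup K G \<longrightarrow> K \<subseteq> H \<longrightarrow> F K n a)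
     \<comment> \<open>closed under conjugation\<close>
   \<and> (\<forall>H n a g. F H n a \<longrightarrow> g \<in> carrier G \<longrightarrow>
        F ((\<lambda>h. g \<otimes>\<^bsub>G\<^esub> h \<otimes>\<^bsub>G\<^esub> inv\<^bsub>G\<^esub> g) ` H) n
          (\<lambda>h. a (inv\<^bsub>G\<^esub> g \<otimes>\<^bsub>G\<^esub> h \<otimes>\<^bsub>G\<^esub> g)))
     \<comment> \<open>closed under subobjects (an H-set embedding equivariantly into a member)\<close>
   \<and> (\<forall>H n a m b f. F H n a \<longrightarrow> fin_hset G H m b \<longrightarrow> inj_on f {..<m}
        \<longrightarrow> f ` {..<m} \<subseteq> {..<n} \<longrightarrow> equivariant H m b a f \<longrightarrow> F H m b)
     \<comment> \<open>closed under finite coproducts\<close>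
   \<and> (\<forall>H n a m b. F H n a \<longrightarrow> F H m b \<longrightarrow>
        F H (n + m) (\<lambda>h i. if i < n then a h i else n + b h (i - n)))
     \<comment> \<open>closed under finite products\<close>
   \<and> (\<forall>H n a m b. F H n a \<longrightarrow> F H m b \<longrightarrow>
        F H (n * m) (\<lambda>h i. a h (i div m) * m + b h (i mod m)))
     \<comment> \<open>closed under self-induction: if H/K is in F(H) and T is in F(K) then H \<times>_K T is in F(H).
        H \<times>_K T is characterised up to isomorphism as an H-set X with an H-map to H/K
        whose fibre over the coset eK is K-isomorphic to T.\<close>
   \<and> (\<forall>H K p c i0 m b n x \<pi> f.
        fin_hset G H p c \<longrightarrow> F H p c \<longrightarrow> i0 < p \<longrightarrow> {h \<in> H. c h i0 = i0} = K
        \<longrightarrow> (\<forall>j<p. \<exists>h\<in>H. c h i0 = j)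
        \<longrightarrow> F K m b \<longrightarrow> fin_hset G H n x
        \<longrightarrow> \<pi> ` {..<n} \<subseteq> {..<p} \<longrightarrow> equivariant H n x c \<pi>
        \<longrightarrow> bij_betw f {..<m} {i. i < n \<and> \<pi> i = i0} \<longrightarrow> equivariant K m b x f
        \<longrightarrow> F H n x)"

text \<open>A set of exponents is given as an indexed family: an index set I, and for each index
  i a subgroup grp i and an ordered finite (grp i)-set dat i = (n, a).
  The generators of S_N are the summands (G \<times> \<Sigma>_0)/\<Gamma>_\<emptyset> (tag Nul),
  (G \<times> \<Sigma>_2)/\<Gamma>_** (tag Bin) and (G \<times> \<Sigma>_|T|)/\<Gamma>_T (tag Ex i).\<close>

datatype 'i gtag = Nul | Bin | Ex 'i

fun tag_grp :: "'g monoid \<Rightarrow> ('i \<Rightarrow> 'g set) \<Rightarrow> 'i gtag \<Rightarrow> 'g set" where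
  "tag_grp G grp Nul = carrier G"
| "tag_grp G grp Bin = carrier G"
| "tag_grp G grp (Ex i) = grp i"

fun tag_ar :: "('i \<Rightarrow> nat \<times> ('g \<Rightarrow> nat \<Rightarrow> nat)) \<Rightarrow> 'i gtag \<Rightarrow> nat" where
  "tag_ar dat Nul = 0"
| "tag_ar dat Bin = 2"
| "tag_ar dat (Ex i) = fst (dat i)"

fun tag_perm :: "('i \<Rightarrow> nat \<times> ('g \<Rightarrow> nat \<Rightarrow> nat)) \<Rightarrow> 'i gtag \<Rightarrow> 'g \<Rightarrow> nat \<Rightarrow> nat" where
  "tag_perm dat Nul h = id"
| "tag_perm dat Bin h = id"
| "tag_perm dat (Ex i) h = (\<lambda>j. if j < fst (dat i) then snd (dat i) h j else j)"

fun tag_valid :: "'i set \<Rightarrow> 'i gtag \<Rightarrow> bool" where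
  "tag_valid I Nul = True"
| "tag_valid I Bin = True"
| "tag_valid I (Ex i) = (i \<in> I)"

text \<open>Trees representing elements of the free operad F(S_N): a node carries a generator,
  i.e. a summand tag x together with a representative (g, \<tau>) \<in> G \<times> \<Sigma>_k of the coset
  (g, \<tau>)\<Gamma>, and an ordered list of children (child j plugged into input j).\<close>

datatype ('i, 'g) ftree = Leaf nat | Node "'i gtag" 'g "nat \<Rightarrow> nat" "('i, 'g) ftree list"

fun leaves :: "('i, 'g) ftree \<Rightarrow> nat list" where
  "leaves (Leaf j) = [j]"
| "leaves (Node x g \<tau> ts) = concat (map leaves ts)"

inductive nodes_ok :: "'g monoid \<Rightarrow> 'i set \<Rightarrow> ('i \<Rightarrow> nat \<times> ('g \<Rightarrow> nat \<Rightarrow> nat))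
    \<Rightarrow> ('i, 'g) ftree \<Rightarrow> bool" for G I dat where
  leaf: "nodes_ok G I dat (Leaf j)"
| node: "\<lbrakk> tag_valid I x; g \<in> carrier G; \<tau> permutes {..<tag_ar dat x};
           length ts = tag_ar dat x; \<forall>t\<in>set ts. nodes_ok G I dat t \<rbrakk>
         \<Longrightarrow> nodes_ok G I dat (Node x g \<tau> ts)"

definition wf_tree :: "'g monoid \<Rightarrow> 'i set \<Rightarrow> ('i \<Rightarrow> nat \<times> ('g \<Rightarrow> nat \<Rightarrow> nat))
    \<Rightarrow> nat \<Rightarrow> ('i, 'g) ftree \<Rightarrow> bool" where
  "wf_tree G I dat n t \<longleftrightarrow> nodes_ok G I dat t \<and> distinct (leaves t) \<and> set (leaves t) = {..<n}"

text \<open>Identification of trees: the congruence generated by the coset relation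
  (g, \<tau>) \<sim> (g h, \<tau> \<sigma>(h)) for h \<in> H and the operadic equivariance relation
  Node (\<rho>\<cdot>s) ts = Node s (ts \<circ> \<rho>).\<close>
inductive feq :: "'g monoid \<Rightarrow> 'i set \<Rightarrow> ('i \<Rightarrow> 'g set) \<Rightarrow> ('i \<Rightarrow> nat \<times> ('g \<Rightarrow> nat \<Rightarrow> nat))
    \<Rightarrow> ('i, 'g) ftree \<Rightarrow> ('i, 'g) ftree \<Rightarrow> bool" for G I grp dat where
  refl: "feq G I grp dat t t"
| sym: "feq G I grp dat s t \<Longrightarrow> feq G I grp dat t s"
| trans: "feq G I grp dat s t \<Longrightarrow> feq G I grp dat t u \<Longrightarrow> feq G I grp dat s u"
| cong: "list_all2 (feq G I grp dat) ts us \<Longrightarrow> feq G I grp dat (Node x g \<tau> ts) (Node x g \<tau> us)"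
| coset: "\<lbrakk> nodes_ok G I dat (Node x g \<tau> ts); h \<in> tag_grp G grp x \<rbrakk> \<Longrightarrow>
     feq G I grp dat (Node x (g \<otimes>\<^bsub>G\<^esub> h) (\<tau> \<circ> tag_perm dat x h) ts) (Node x g \<tau> ts)"
| sigma: "\<lbrakk> nodes_ok G I dat (Node x g \<tau> ts); \<rho> permutes {..<length ts} \<rbrakk> \<Longrightarrow>
     feq G I grp dat (Node x g (\<rho> \<circ> \<tau>) ts) (Node x g \<tau> (map (\<lambda>j. ts ! \<rho> j) [0..<length ts]))"

fun tact :: "'g monoid \<Rightarrow> 'g \<Rightarrow> (nat \<Rightarrow> nat) \<Rightarrow> ('i, 'g) ftree \<Rightarrow> ('i, 'g) ftree" where
  "tact G g' \<pi> (Leaf j) = Leaf (\<pi> j)"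
| "tact G g' \<pi> (Node x g \<tau> ts) = Node x (g' \<otimes>\<^bsub>G\<^esub> g) \<tau> (map (tact G g' \<pi>) ts)"

text \<open>SM_N is the chaotic category on F(S_N), levelwise. The \<Gamma>_T-fixed subcategory of a
  chaotic G-category is the chaotic category on the fixed objects, so it is nonempty iff
  some object (element of F(S_N)(n), i.e. an identification class of trees) is fixed.\<close>
definition SM_admissible :: "'g monoid \<Rightarrow> 'i set \<Rightarrow> ('i \<Rightarrow> 'g set) \<Rightarrow> ('i \<Rightarrow> nat \<times> ('g \<Rightarrow> nat \<Rightarrow> nat))
    \<Rightarrow> 'g set \<Rightarrow> nat \<Rightarrow> ('g \<Rightarrow> nat \<Rightarrow> nat) \<Rightarrow> bool" where
  "SM_admissible G I grp dat H n a \<longleftrightarrow>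
     (\<exists>t. wf_tree G I dat n t \<and> (\<forall>h\<in>H. feq G I grp dat (tact G h (a h) t) t))"

definition O_index :: "'g monoid \<Rightarrow> ('g set \<Rightarrow> nat \<Rightarrow> ('g \<Rightarrow> nat \<Rightarrow> nat) \<Rightarrow> bool) \<Rightarrow> ('g set \<times> 'g set) set" where
  "O_index G F = {(H, K). subgroup H G \<and> subgroup K G \<and> K \<subset> H \<and>
                     (\<exists>p c. is_orbit G H K p c \<and> F H p c)}"

end

theory Submission
  imports Defs
begin

text \<open>
  If a tree is fixed by \<open>H\<close> up to identification, comparing the root with its
  translates shows that \<open>H\<close> acts on the inputs of the root generator through a conjugate of
  the group of that generator; by restriction and conjugation these inputs form a member of
  \<open>F\<close>. The leaves fibre equivariantly over the inputs, and the fibre over an input is the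
  leaf set of a subtree fixed by its stabiliser, so by induction on the tree and
  self-induction the leaves lie in \<open>F\<close>. Conversely, a member of \<open>F\<close> is a disjoint union of
  orbits: a fixed point is a leaf, an orbit \<open>H/K\<close> with \<open>K \<noteq> H\<close> is realised by the single
  generator \<open>H/K\<close> of \<open>O(F)\<close> with its inputs relabelled, and binary generators assemble the
  orbits.
\<close>

lemma set_conv_nth_permutes:
  "p permutes {..<length xs} \<Longrightarrow> set xs = (\<lambda>j. xs ! p j) ` {..<length xs}"
proof -
  assume p: "p permutes {..<length xs}"
  have "set xs = (!) xs ` {..<length xs}" by (auto simp: in_set_conv_nth)
  also have "\<dots> = (!) xs ` p ` {..<length xs}" using permutes_image[OF p] by simp
  finally show ?thesis by (simp add: image_image)
qed

lemma distinct_concat_nth: "distinct (concat xs) \<Longrightarrow> i < length xs \<Longrightarrow> distinct (xs ! i)"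
  by (induction xs arbitrary: i) (auto simp: nth_Cons split: nat.splits)

lemma distinct_concat_nth_disjoint:
  "\<lbrakk>distinct (concat xs); i < length xs; i' < length xs; i \<noteq> i'\<rbrakk> \<Longrightarrow> set (xs ! i) \<inter> set (xs ! i') = {}"
proof (induction xs arbitrary: i i')
  case (Cons x xs)
  have "set (xs ! m) \<subseteq> set (concat xs)" if "m < length xs" for m
    using that by (auto simp: set_concat) (metis nth_mem)
  thus ?case using Cons by (cases i; cases i') (auto, blast+)
qed simp

lemma index_of_disjoint_family:
  assumes "\<forall>j\<in>P. \<forall>j'\<in>P. j \<noteq> j' \<longrightarrow> A j \<inter> A j' = {}" and "j \<in> P" and "y \<in> A j"
  shows "(THE j. j \<in> P \<and> y \<in> A j) = j"
  using assms by (intro the_equality) blast+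

lemma concat_map_singleton: "concat (map (\<lambda>x. [f x]) xs) = map f xs"
  by (induction xs) auto

section \<open>Group actions on finite sets of labels\<close>

definition acts_on :: "('g, 'b) monoid_scheme \<Rightarrow> 'g set \<Rightarrow> nat set \<Rightarrow> ('g \<Rightarrow> nat \<Rightarrow> nat) \<Rightarrow> bool" where
  "acts_on G H L a \<longleftrightarrow> subgroup H G \<and> (\<forall>h\<in>H. \<forall>x\<in>L. a h x \<in> L) \<and> (\<forall>x\<in>L. a \<one>\<^bsub>G\<^esub> x = x)
     \<and> (\<forall>h\<in>H. \<forall>k\<in>H. \<forall>x\<in>L. a (h \<otimes>\<^bsub>G\<^esub> k) x = a h (a k x))"

definition orbit :: "'g set \<Rightarrow> ('g \<Rightarrow> nat \<Rightarrow> nat) \<Rightarrow> nat \<Rightarrow> nat set" where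
  "orbit H a j = (\<lambda>h. a h j) ` H"

lemma fin_hset_iff_acts_on: "fin_hset G H n a \<longleftrightarrow> acts_on G H {..<n} a"
  unfolding fin_hset_def acts_on_def by auto

lemma acts_on_subgroup: "acts_on G H L a \<Longrightarrow> subgroup H G"
  unfolding acts_on_def by blast

lemma acts_on_closed: "acts_on G H L a \<Longrightarrow> h \<in> H \<Longrightarrow> x \<in> L \<Longrightarrow> a h x \<in> L"
  unfolding acts_on_def by blast

lemma acts_on_one: "acts_on G H L a \<Longrightarrow> x \<in> L \<Longrightarrow> a \<one>\<^bsub>G\<^esub> x = x"
  unfolding acts_on_def by blast

lemma acts_on_mult:
  "acts_on G H L a \<Longrightarrow> h \<in> H \<Longrightarrow> k \<in> H \<Longrightarrow> x \<in> L \<Longrightarrow> a (h \<otimes>\<^bsub>G\<^esub> k) x = a h (a k x)"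
  unfolding acts_on_def by blast

lemma acts_on_restrict:
  "\<lbrakk>acts_on G H L a; subgroup K G; K \<subseteq> H; S \<subseteq> L; \<forall>h\<in>K. \<forall>x\<in>S. a h x \<in> S\<rbrakk>
   \<Longrightarrow> acts_on G K S a"
  unfolding acts_on_def by blast

lemma fin_hset_pullback:
  assumes act: "acts_on G H L a" and e: "bij_betw e {..<m} L"
  defines "b \<equiv> \<lambda>h i. inv_into {..<m} e (a h (e i))"
  shows "fin_hset G H m b" and "\<forall>h\<in>H. \<forall>i<m. e (b h i) = a h (e i)"
proof -
  have e_in: "e i \<in> L" if "i < m" for i using e that by (auto simp: bij_betw_def)
  have e_inv: "e (inv_into {..<m} e y) = y" if "y \<in> L" for y
    using e that by (simp add: bij_betw_inv_into_right)
  have inv_e: "inv_into {..<m} e (e i) = i" if "i < m" for i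
    using e that by (simp add: bij_betw_inv_into_left)
  have inv_less: "inv_into {..<m} e y < m" if "y \<in> L" for y
    using e that by (metis bij_betw_def inv_into_into lessThan_iff)
  show eq: "\<forall>h\<in>H. \<forall>i<m. e (b h i) = a h (e i)"
    unfolding b_def using e_inv e_in acts_on_closed[OF act] by auto
  show "fin_hset G H m b" unfolding fin_hset_def
  proof (intro conjI allI ballI impI)
    show "subgroup H G" using act by (rule acts_on_subgroup)
  next
    fix h i assume "h \<in> H" "i < m"
    thus "b h i < m" unfolding b_def using inv_less acts_on_closed[OF act] e_in by auto
  next
    fix i assume "i < m"
    thus "b \<one>\<^bsub>G\<^esub> i = i" unfolding b_def using acts_on_one[OF act] e_in inv_e by auto
  next
    fix h k i assume "h \<in> H" "k \<in> H" "i < m"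
    thus "b (h \<otimes>\<^bsub>G\<^esub> k) i = b h (b k i)"
      unfolding b_def using e_inv acts_on_closed[OF act] acts_on_mult[OF act] e_in by auto
  qed
qed

lemma equivariant_in_coordinates:
  assumes e: "bij_betw e {..<p} M" and eq_e: "equivariant H p c \<rho> e"
    and c_less: "\<forall>h\<in>H. \<forall>i<p. c h i < p"
    and eX: "bij_betw eX {..<n} X" and eq_x: "\<forall>h\<in>H. \<forall>i<n. eX (x h i) = a h (eX i)"
    and q: "q ` X \<subseteq> M" and q_eq: "\<forall>h\<in>H. \<forall>y\<in>X. q (a h y) = \<rho> h (q y)"
  shows "(\<lambda>i. inv_into {..<p} e (q (eX i))) ` {..<n} \<subseteq> {..<p}"
    and "equivariant H n x c (\<lambda>i. inv_into {..<p} e (q (eX i)))"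
proof -
  have q_in: "q (eX i) \<in> M" if "i < n" for i using q eX that by (auto simp: bij_betw_def)
  have e_inv: "inv_into {..<p} e y < p" "e (inv_into {..<p} e y) = y" if "y \<in> M" for y
    using e that by (auto simp: bij_betw_def inv_into_into f_inv_into_f)
  show "(\<lambda>i. inv_into {..<p} e (q (eX i))) ` {..<n} \<subseteq> {..<p}" using e_inv(1) q_in by auto
  show "equivariant H n x c (\<lambda>i. inv_into {..<p} e (q (eX i)))" unfolding equivariant_def
  proof (intro ballI allI impI)
    fix h i assume h: "h \<in> H" and i: "i < n"
    let ?i = "inv_into {..<p} e (q (eX i))"
    have "inv_into {..<p} e (q (eX (x h i))) = inv_into {..<p} e (\<rho> h (q (eX i)))"
      using eq_x q_eq h i eX by (auto simp: bij_betw_def)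
    also have "\<rho> h (q (eX i)) = e (c h ?i)"
      using eq_e h e_inv[OF q_in[OF i]] unfolding equivariant_def by simp
    finally show "inv_into {..<p} e (q (eX (x h i))) = c h ?i"
      using e c_less h e_inv(1)[OF q_in[OF i]] by (simp add: bij_betw_inv_into_left)
  qed
qed

context group
begin

lemma acts_on_inv:
  assumes act: "acts_on G H L a" and h: "h \<in> H" and x: "x \<in> L"
  shows "a (inv h) (a h x) = x" and "a h (a (inv h) x) = x"
proof -
  have sg: "subgroup H G" using act by (rule acts_on_subgroup)
  have hG: "h \<in> carrier G" and ih: "inv h \<in> H"
    using h subgroup.mem_carrier[OF sg] subgroup.m_inv_closed[OF sg] by auto
  show "a (inv h) (a h x) = x"
    using acts_on_mult[OF act ih h x] acts_on_one[OF act x] hG by simp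
  show "a h (a (inv h) x) = x"
    using acts_on_mult[OF act h ih x] acts_on_one[OF act x] hG by simp
qed

lemma stabiliser_subgroup:
  assumes act: "acts_on G H L a" and j: "j \<in> L"
  shows "subgroup {h \<in> H. a h j = j} G"
proof (rule subgroupI)
  have sg: "subgroup H G" using act by (rule acts_on_subgroup)
  show "{h \<in> H. a h j = j} \<subseteq> carrier G" using subgroup.subset[OF sg] by blast
  show "{h \<in> H. a h j = j} \<noteq> {}" using subgroup.one_closed[OF sg] acts_on_one[OF act j] by blast
  fix h k assume h: "h \<in> {h \<in> H. a h j = j}" and k: "k \<in> {h \<in> H. a h j = j}"
  show "inv h \<in> {h \<in> H. a h j = j}"
    using acts_on_inv(1)[OF act _ j, of h] h subgroup.m_inv_closed[OF sg] by auto
  show "h \<otimes> k \<in> {h \<in> H. a h j = j}"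
    using acts_on_mult[OF act _ _ j, of h k] h k subgroup.m_closed[OF sg] by auto
qed

lemma orbit_subset: "acts_on G H L a \<Longrightarrow> j \<in> L \<Longrightarrow> orbit H a j \<subseteq> L"
  unfolding orbit_def by (auto intro: acts_on_closed)

lemma in_orbit: "acts_on G H L a \<Longrightarrow> j \<in> L \<Longrightarrow> j \<in> orbit H a j"
  unfolding orbit_def
  by (metis acts_on_one acts_on_subgroup image_eqI subgroup.one_closed)

lemma orbit_invariant:
  assumes act: "acts_on G H L a" and j: "j \<in> L" and h: "h \<in> H" and y: "y \<in> orbit H a j"
  shows "a h y \<in> orbit H a j"
proof -
  obtain k where k: "k \<in> H" "y = a k j" using y unfolding orbit_def by blast
  have "a h y = a (h \<otimes> k) j" using acts_on_mult[OF act h k(1) j] k by simp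
  thus ?thesis unfolding orbit_def
    using subgroup.m_closed[OF acts_on_subgroup[OF act] h k(1)] by blast
qed

lemma orbit_complement_invariant:
  assumes act: "acts_on G H L a" and j: "j \<in> L" and h: "h \<in> H" and y: "y \<in> L - orbit H a j"
  shows "a h y \<in> L - orbit H a j"
proof -
  have "a (inv h) (a h y) \<in> orbit H a j" if "a h y \<in> orbit H a j"
    using orbit_invariant[OF act j _ that] subgroup.m_inv_closed[OF acts_on_subgroup[OF act] h] .
  thus ?thesis using y acts_on_inv(1)[OF act h] acts_on_closed[OF act h] by auto
qed

lemma invariant_subset_induct:
  assumes act: "acts_on G H L a" and fin: "finite L"
    and S: "S \<subseteq> L" and S_inv: "\<forall>h\<in>H. \<forall>x\<in>S. a h x \<in> S"
    and empty: "Q {}"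
    and orbit: "\<And>j. j \<in> L \<Longrightarrow> Q (orbit H a j)"
    and union: "\<And>A B. A \<subseteq> L \<Longrightarrow> B \<subseteq> L \<Longrightarrow> A \<inter> B = {} \<Longrightarrow>
        \<forall>h\<in>H. \<forall>x\<in>A. a h x \<in> A \<Longrightarrow> \<forall>h\<in>H. \<forall>x\<in>B. a h x \<in> B \<Longrightarrow> Q A \<Longrightarrow> Q B \<Longrightarrow> Q (A \<union> B)"
  shows "Q S"
  using S S_inv
proof (induction "card S" arbitrary: S rule: less_induct)
  case less
  show ?case
  proof (cases "S = {}")
    case True
    with empty show ?thesis by simp
  next
    case False
    then obtain j where j: "j \<in> S" by blast
    have actS: "acts_on G H S a"
      using acts_on_restrict[OF act acts_on_subgroup[OF act]] less.prems by blast
    let ?O = "orbit H a j"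
    have OS: "?O \<subseteq> S" using orbit_subset[OF actS j] .
    have O_inv: "\<forall>h\<in>H. \<forall>x\<in>?O. a h x \<in> ?O" using orbit_invariant[OF actS j] by blast
    have C_inv: "\<forall>h\<in>H. \<forall>x\<in>S - ?O. a h x \<in> S - ?O"
      using orbit_complement_invariant[OF actS j] by blast
    have "finite S" using less.prems(1) fin by (rule finite_subset)
    hence "card (S - ?O) < card S"
      using in_orbit[OF actS j] j by (intro psubset_card_mono) auto
    moreover have "S - ?O \<subseteq> L" using less.prems(1) by blast
    ultimately have "Q (S - ?O)" using less.hyps C_inv by blast
    moreover have "Q ?O" using orbit j less.prems(1) by blast
    ultimately have "Q (?O \<union> (S - ?O))"
      using union[OF _ _ _ O_inv C_inv] OS less.prems(1) by blast
    moreover have "?O \<union> (S - ?O) = S" using OS by blast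
    ultimately show ?thesis by simp
  qed
qed

lemma orbit_map_well_defined:
  assumes act_c: "acts_on G H L c" and i0: "i0 \<in> L" and stab_c: "{h \<in> H. c h i0 = i0} = K"
    and act_d: "acts_on G H M d" and i1: "i1 \<in> M" and stab_d: "{h \<in> H. d h i1 = i1} = K"
    and h: "h \<in> H" and h': "h' \<in> H" and eq: "c h i0 = c h' i0"
  shows "d h i1 = d h' i1"
proof -
  have sg: "subgroup H G" using act_c by (rule acts_on_subgroup)
  have hG: "h \<in> carrier G" "h' \<in> carrier G" using h h' subgroup.mem_carrier[OF sg] by auto
  have ih: "inv h \<in> H" using subgroup.m_inv_closed[OF sg h] .
  have m: "inv h \<otimes> h' \<in> H" using subgroup.m_closed[OF sg ih h'] .
  have "c (inv h \<otimes> h') i0 = c (inv h) (c h i0)"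
    using acts_on_mult[OF act_c ih h' i0] eq by simp
  also have "\<dots> = i0" using acts_on_inv(1)[OF act_c h i0] .
  finally have "d (inv h \<otimes> h') i1 = i1" using stab_c stab_d m by blast
  hence "d h (d (inv h \<otimes> h') i1) = d h i1" by simp
  moreover have "h \<otimes> (inv h \<otimes> h') = h'" using hG by (simp add: m_assoc[symmetric])
  ultimately show ?thesis using acts_on_mult[OF act_d h m i1] by simp
qed

lemma transitive_actions_iso:
  assumes act_c: "acts_on G H L c" and i0: "i0 \<in> L" and stab_c: "{h \<in> H. c h i0 = i0} = K"
    and trans_c: "\<forall>j\<in>L. \<exists>h\<in>H. c h i0 = j"
    and act_d: "acts_on G H M d" and i1: "i1 \<in> M" and stab_d: "{h \<in> H. d h i1 = i1} = K"
    and trans_d: "\<forall>j\<in>M. \<exists>h\<in>H. d h i1 = j"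
  shows "\<exists>f. bij_betw f L M \<and> (\<forall>h\<in>H. \<forall>j\<in>L. f (c h j) = d h (f j))"
proof -
  have sg: "subgroup H G" using act_c by (rule acts_on_subgroup)
  define f where "f j = d (SOME h. h \<in> H \<and> c h i0 = j) i1" for j
  have f_orbit: "f (c h i0) = d h i1" if h: "h \<in> H" for h
  proof -
    have "\<exists>h'. h' \<in> H \<and> c h' i0 = c h i0" using h by blast
    hence "(SOME h'. h' \<in> H \<and> c h' i0 = c h i0) \<in> H
        \<and> c (SOME h'. h' \<in> H \<and> c h' i0 = c h i0) i0 = c h i0"
      by (rule someI_ex)
    thus ?thesis
      unfolding f_def using orbit_map_well_defined[OF act_c i0 stab_c act_d i1 stab_d _ h] by blast
  qed
  have "inj_on f L"
  proof (rule inj_onI)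
    fix x y assume "x \<in> L" "y \<in> L" "f x = f y"
    moreover obtain hx hy where "hx \<in> H" "c hx i0 = x" "hy \<in> H" "c hy i0 = y"
      using trans_c \<open>x \<in> L\<close> \<open>y \<in> L\<close> by meson
    ultimately show "x = y"
      using f_orbit orbit_map_well_defined[OF act_d i1 stab_d act_c i0 stab_c] by metis
  qed
  moreover have "f ` L = M"
  proof
    show "f ` L \<subseteq> M" using trans_c f_orbit acts_on_closed[OF act_d _ i1] by fastforce
    show "M \<subseteq> f ` L"
    proof
      fix y assume "y \<in> M"
      then obtain h where "h \<in> H" "d h i1 = y" using trans_d by auto
      thus "y \<in> f ` L" using f_orbit acts_on_closed[OF act_c _ i0] by (metis image_eqI)
    qed
  qed
  moreover have "\<forall>h\<in>H. \<forall>j\<in>L. f (c h j) = d h (f j)"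
  proof (intro ballI)
    fix h j assume h: "h \<in> H" and "j \<in> L"
    then obtain hj where hj: "hj \<in> H" "c hj i0 = j" using trans_c by blast
    have "f (c h j) = f (c (h \<otimes> hj) i0)" using acts_on_mult[OF act_c h hj(1) i0] hj by simp
    also have "\<dots> = d h (d hj i1)"
      using f_orbit subgroup.m_closed[OF sg h hj(1)] acts_on_mult[OF act_d h hj(1) i1] by simp
    also have "\<dots> = d h (f j)" using f_orbit[OF hj(1)] hj(2) by simp
    finally show "f (c h j) = d h (f j)" .
  qed
  ultimately show ?thesis unfolding bij_betw_def by blast
qed

lemma mult_inv_cancel_left: "\<lbrakk>x \<in> carrier G; y \<in> carrier G\<rbrakk> \<Longrightarrow> x \<otimes> (inv x \<otimes> y) = y"
  by (simp add: m_assoc[symmetric])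

lemma conj_image_subgroup:
  assumes sg: "subgroup H G" and g: "g \<in> carrier G"
  shows "subgroup ((\<lambda>h. inv g \<otimes> h \<otimes> g) ` H) G"
proof (rule subgroupI)
  note hG = subgroup.mem_carrier[OF sg]
  show "(\<lambda>h. inv g \<otimes> h \<otimes> g) ` H \<subseteq> carrier G" using hG g by auto
  show "(\<lambda>h. inv g \<otimes> h \<otimes> g) ` H \<noteq> {}" using subgroup.one_closed[OF sg] by blast
  fix x y assume "x \<in> (\<lambda>h. inv g \<otimes> h \<otimes> g) ` H" "y \<in> (\<lambda>h. inv g \<otimes> h \<otimes> g) ` H"
  then obtain h k where h: "h \<in> H" "x = inv g \<otimes> h \<otimes> g" and k: "k \<in> H" "y = inv g \<otimes> k \<otimes> g"
    by blast
  have "inv x = inv g \<otimes> inv h \<otimes> g" using h hG g by (simp add: inv_mult_group m_assoc)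
  thus "inv x \<in> (\<lambda>h. inv g \<otimes> h \<otimes> g) ` H" using subgroup.m_inv_closed[OF sg h(1)] by blast
  have "x \<otimes> y = inv g \<otimes> (h \<otimes> k) \<otimes> g"
    using h k hG g by (simp add: m_assoc mult_inv_cancel_left)
  thus "x \<otimes> y \<in> (\<lambda>h. inv g \<otimes> h \<otimes> g) ` H" using subgroup.m_closed[OF sg h(1) k(1)] by blast
qed

lemma conj_image_inverse:
  assumes "H \<subseteq> carrier G" and "g \<in> carrier G"
  shows "(\<lambda>h. g \<otimes> h \<otimes> inv g) ` (\<lambda>h. inv g \<otimes> h \<otimes> g) ` H = H"
  using assms by (auto simp: image_image subset_iff m_assoc mult_inv_cancel_left)

end

section \<open>Indexing systems on arbitrary finite sets of labels\<close>

definition in_F :: "('g set \<Rightarrow> nat \<Rightarrow> ('g \<Rightarrow> nat \<Rightarrow> nat) \<Rightarrow> bool) \<Rightarrow> 'g set \<Rightarrow> nat set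
    \<Rightarrow> ('g \<Rightarrow> nat \<Rightarrow> nat) \<Rightarrow> bool" where
  "in_F F H L a \<longleftrightarrow> (\<exists>n b e. F H n b \<and> bij_betw e {..<n} L \<and> equivariant H n b a e)"

locale idx_system = group G for G :: "'g monoid" (structure) +
  fixes F :: "'g set \<Rightarrow> nat \<Rightarrow> ('g \<Rightarrow> nat \<Rightarrow> nat) \<Rightarrow> bool"
  assumes indexing: "indexing_system G F"
begin

lemma F_fin_hset: "F H n a \<Longrightarrow> fin_hset G H n a"
  using indexing[unfolded indexing_system_def, THEN conjunct1] by blast

lemma F_trivial: "subgroup H G \<Longrightarrow> F H n (\<lambda>h i. i)"
  using indexing[unfolded indexing_system_def, THEN conjunct2, THEN conjunct1] by blast

lemma F_iso:
  "\<lbrakk>F H n a; fin_hset G H n b; bij_betw f {..<n} {..<n}; equivariant H n a b f\<rbrakk> \<Longrightarrow> F H n b"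
  using indexing[unfolded indexing_system_def, THEN conjunct2, THEN conjunct2,
      THEN conjunct1] by blast

lemma F_restrict: "\<lbrakk>F H n a; subgroup K G; K \<subseteq> H\<rbrakk> \<Longrightarrow> F K n a"
  using indexing[unfolded indexing_system_def, THEN conjunct2, THEN conjunct2,
      THEN conjunct2, THEN conjunct1] by blast

lemma F_conj:
  "\<lbrakk>F H n a; g \<in> carrier G\<rbrakk> \<Longrightarrow> F ((\<lambda>h. g \<otimes> h \<otimes> inv g) ` H) n (\<lambda>h. a (inv g \<otimes> h \<otimes> g))"
  using indexing[unfolded indexing_system_def, THEN conjunct2, THEN conjunct2,
      THEN conjunct2, THEN conjunct2, THEN conjunct1] by blast

lemma F_subobject:
  "\<lbrakk>F H n a; fin_hset G H m b; inj_on f {..<m}; f ` {..<m} \<subseteq> {..<n}; equivariant H m b a f\<rbrakk>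
   \<Longrightarrow> F H m b"
  using indexing[unfolded indexing_system_def, THEN conjunct2, THEN conjunct2,
      THEN conjunct2, THEN conjunct2, THEN conjunct2, THEN conjunct1] by blast

lemma F_coproduct:
  "\<lbrakk>F H n a; F H m b\<rbrakk> \<Longrightarrow> F H (n + m) (\<lambda>h i. if i < n then a h i else n + b h (i - n))"
  using indexing[unfolded indexing_system_def, THEN conjunct2, THEN conjunct2,
      THEN conjunct2, THEN conjunct2, THEN conjunct2, THEN conjunct2,
      THEN conjunct1] by blast

lemma F_self_induction:
  assumes "fin_hset G H p c" "F H p c" "i0 < p" "{h \<in> H. c h i0 = i0} = K"
    "\<forall>j<p. \<exists>h\<in>H. c h i0 = j" "F K m b" "fin_hset G H n x"
    "\<pi> ` {..<n} \<subseteq> {..<p}" "equivariant H n x c \<pi>"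
    "bij_betw f {..<m} {i. i < n \<and> \<pi> i = i0}" "equivariant K m b x f"
  shows "F H n x"
  using indexing[unfolded indexing_system_def, THEN conjunct2, THEN conjunct2,
      THEN conjunct2, THEN conjunct2, THEN conjunct2, THEN conjunct2, THEN conjunct2,
      THEN conjunct2] assms by blast

lemma F_conj_pullback:
  assumes F: "F K n d" and sg: "subgroup H G" and g: "g \<in> carrier G"
    and conj: "\<forall>h\<in>H. inv g \<otimes> h \<otimes> g \<in> K"
  shows "F H n (\<lambda>h. d (inv g \<otimes> h \<otimes> g))"
proof -
  let ?H' = "(\<lambda>h. inv g \<otimes> h \<otimes> g) ` H"
  have "F ?H' n d"
    using F_restrict[OF F conj_image_subgroup[OF sg g]] conj by blast
  from F_conj[OF this g] show ?thesis
    using conj_image_inverse[OF subgroup.subset[OF sg] g] by simp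
qed

lemma is_orbit_iso:
  assumes "is_orbit G H K p c" and "is_orbit G H K k d"
  shows "\<exists>f. bij_betw f {..<p} {..<k} \<and> equivariant H p c d f"
proof -
  obtain i0 where c: "acts_on G H {..<p} c" "i0 \<in> {..<p}" "{h \<in> H. c h i0 = i0} = K"
    "\<forall>j\<in>{..<p}. \<exists>h\<in>H. c h i0 = j"
    using assms(1) unfolding is_orbit_def fin_hset_iff_acts_on by auto
  obtain i1 where d: "acts_on G H {..<k} d" "i1 \<in> {..<k}" "{h \<in> H. d h i1 = i1} = K"
    "\<forall>j\<in>{..<k}. \<exists>h\<in>H. d h i1 = j"
    using assms(2) unfolding is_orbit_def fin_hset_iff_acts_on by auto
  obtain f where "bij_betw f {..<p} {..<k}" "\<forall>h\<in>H. \<forall>j\<in>{..<p}. f (c h j) = d h (f j)"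
    using transitive_actions_iso[OF c d] by blast
  thus ?thesis unfolding equivariant_def by auto
qed

lemma in_F_acts_on: "in_F F H L a \<Longrightarrow> acts_on G H L a"
proof -
  assume "in_F F H L a"
  then obtain n b e where Fb: "F H n b" and e: "bij_betw e {..<n} L" and eq: "equivariant H n b a e"
    unfolding in_F_def by blast
  have act: "acts_on G H {..<n} b" using F_fin_hset[OF Fb] by (simp add: fin_hset_iff_acts_on)
  have L: "L = e ` {..<n}" using e by (simp add: bij_betw_def)
  have eq': "a h (e i) = e (b h i)" if "h \<in> H" "i < n" for h i
    using eq that unfolding equivariant_def by simp
  show "acts_on G H L a" unfolding acts_on_def L
    using acts_on_subgroup[OF act] acts_on_closed[OF act] acts_on_one[OF act] acts_on_mult[OF act]
      subgroup.one_closed[OF acts_on_subgroup[OF act]] subgroup.m_closed[OF acts_on_subgroup[OF act]]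
    by (auto simp: eq')
qed

lemma in_F_finite: "in_F F H L a \<Longrightarrow> finite L"
  unfolding in_F_def using bij_betw_finite by blast

lemma in_F_lessThan: "F H n a \<Longrightarrow> in_F F H {..<n} a"
  unfolding in_F_def equivariant_def by (metis bij_betw_id id_apply)

lemma in_F_iff_F: "fin_hset G H n a \<Longrightarrow> in_F F H {..<n} a \<longleftrightarrow> F H n a"
proof
  assume fin: "fin_hset G H n a" and "in_F F H {..<n} a"
  then obtain m b e where Fb: "F H m b" and e: "bij_betw e {..<m} {..<n}" and eq: "equivariant H m b a e"
    unfolding in_F_def by blast
  have "m = n" using bij_betw_same_card[OF e] by simp
  thus "F H n a" using F_iso[OF Fb _ _ eq] fin e by simp
next
  assume "F H n a"
  thus "in_F F H {..<n} a" by (rule in_F_lessThan)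
qed

lemma in_F_iso:
  assumes "in_F F H L a" and f: "bij_betw f L L'" and eq: "\<forall>h\<in>H. \<forall>x\<in>L. f (a h x) = a' h (f x)"
  shows "in_F F H L' a'"
proof -
  obtain n b e where Fb: "F H n b" and e: "bij_betw e {..<n} L" and eq_e: "equivariant H n b a e"
    using assms(1) unfolding in_F_def by blast
  have "bij_betw (f \<circ> e) {..<n} L'" using e f by (rule bij_betw_trans)
  moreover have "equivariant H n b a' (f \<circ> e)"
    using eq eq_e e unfolding equivariant_def by (auto simp: bij_betw_def)
  ultimately show ?thesis unfolding in_F_def using Fb by blast
qed

lemma in_F_subset:
  assumes L: "in_F F H L a" and S: "S \<subseteq> L" and S_inv: "\<forall>h\<in>H. \<forall>x\<in>S. a h x \<in> S"
  shows "in_F F H S a"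
proof -
  obtain n b e where Fb: "F H n b" and e: "bij_betw e {..<n} L" and eq: "equivariant H n b a e"
    using L unfolding in_F_def by blast
  have act_b: "acts_on G H {..<n} b" using F_fin_hset[OF Fb] by (simp add: fin_hset_iff_acts_on)
  have act: "acts_on G H S a"
    using acts_on_restrict[OF in_F_acts_on[OF L] acts_on_subgroup[OF act_b] _ S S_inv] by blast
  have "finite S" using S in_F_finite[OF L] by (rule finite_subset)
  then obtain eS where eS: "bij_betw eS {..<card S} S"
    using ex_bij_betw_nat_finite atLeast0LessThan by metis
  define m where "m = card S"
  define bS where "bS = (\<lambda>h i. inv_into {..<m} eS (a h (eS i)))"
  have finS: "fin_hset G H m bS" and eqS: "\<forall>h\<in>H. \<forall>i<m. eS (bS h i) = a h (eS i)"
    using fin_hset_pullback[OF act, of eS m] eS unfolding m_def bS_def by auto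
  have act_S: "acts_on G H {..<m} bS" using finS by (simp add: fin_hset_iff_acts_on)
  define f where "f = inv_into {..<n} e \<circ> eS"
  have eS_in: "eS i \<in> L" if "i < m" for i using eS S that unfolding m_def by (auto simp: bij_betw_def)
  have e_f: "e (f i) = eS i" if "i < m" for i
    unfolding f_def using e eS_in[OF that] by (simp add: bij_betw_inv_into_right)
  have f_less: "f i < n" if "i < m" for i
    unfolding f_def using e eS_in[OF that] by (metis bij_betw_def comp_apply inv_into_into lessThan_iff)
  have e_inj: "x = y" if "x < n" "y < n" "e x = e y" for x y
    using e that by (auto simp: bij_betw_def inj_on_def)
  have "inj_on f {..<m}"
    using e_f eS unfolding m_def bij_betw_def inj_on_def by (metis lessThan_iff)
  moreover have "f ` {..<m} \<subseteq> {..<n}" using f_less by auto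
  moreover have "equivariant H m bS b f" unfolding equivariant_def
  proof (intro ballI allI impI)
    fix h i assume h: "h \<in> H" and i: "i < m"
    have bSi: "bS h i < m" using acts_on_closed[OF act_S h] i by simp
    have "e (f (bS h i)) = e (b h (f i))"
      using e_f[OF bSi] eqS h i e_f[OF i] eq f_less[OF i] unfolding equivariant_def by simp
    thus "f (bS h i) = b h (f i)"
      using e_inj f_less[OF bSi] acts_on_closed[OF act_b h] f_less[OF i] by simp
  qed
  ultimately have "F H m bS" using F_subobject[OF Fb finS] by blast
  thus ?thesis unfolding in_F_def equivariant_def using eS eqS m_def by blast
qed

lemma in_F_trivial:
  assumes "subgroup H G" and "finite L" and "\<forall>h\<in>H. \<forall>x\<in>L. a h x = x"
  shows "in_F F H L a"
proof -
  obtain e where e: "bij_betw e {..<card L} L"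
    using assms(2) ex_bij_betw_nat_finite atLeast0LessThan by metis
  hence "equivariant H (card L) (\<lambda>h i. i) a e"
    using assms(3) unfolding equivariant_def by (metis bij_betw_apply lessThan_iff)
  thus ?thesis unfolding in_F_def using e F_trivial[OF assms(1)] by blast
qed

lemma in_F_union:
  assumes A: "in_F F H A a" and B: "in_F F H B a" and disj: "A \<inter> B = {}"
  shows "in_F F H (A \<union> B) a"
proof -
  obtain n b e where Fb: "F H n b" and e: "bij_betw e {..<n} A" and eq_e: "equivariant H n b a e"
    using A unfolding in_F_def by blast
  obtain m c f where Fc: "F H m c" and f: "bij_betw f {..<m} B" and eq_f: "equivariant H m c a f"
    using B unfolding in_F_def by blast
  have act_b: "acts_on G H {..<n} b" and act_c: "acts_on G H {..<m} c"
    using F_fin_hset[OF Fb] F_fin_hset[OF Fc] by (simp_all add: fin_hset_iff_acts_on)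
  define k where "k = (\<lambda>i. if i < n then e i else f (i - n))"
  have "bij_betw k {..<n} A" using e unfolding k_def by (rule bij_betw_cong[THEN iffD1, rotated]) auto
  moreover have "bij_betw k {n..<n+m} B"
  proof -
    have "bij_betw (\<lambda>i. i - n) {n..<n+m} {..<m}"
      by (rule bij_betw_byWitness[where f'="\<lambda>i. i + n"]) auto
    hence "bij_betw (f \<circ> (\<lambda>i. i - n)) {n..<n+m} B" using f by (rule bij_betw_trans)
    thus ?thesis unfolding k_def by (rule bij_betw_cong[THEN iffD1, rotated]) auto
  qed
  ultimately have "bij_betw k ({..<n} \<union> {n..<n+m}) (A \<union> B)" using disj by (rule bij_betw_combine)
  moreover have "{..<n} \<union> {n..<n+m} = {..<n+m}" by auto
  moreover have "equivariant H (n + m) (\<lambda>h i. if i < n then b h i else n + c h (i - n)) a k"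
    unfolding equivariant_def
  proof (intro ballI allI impI)
    fix h i assume h: "h \<in> H" and i: "i < n + m"
    show "k (if i < n then b h i else n + c h (i - n)) = a h (k i)"
    proof (cases "i < n")
      case True
      thus ?thesis using acts_on_closed[OF act_b h] eq_e h unfolding k_def equivariant_def by simp
    next
      case False
      thus ?thesis using acts_on_closed[OF act_c h, of "i - n"] eq_f h i
        unfolding k_def equivariant_def by simp
    qed
  qed
  ultimately show ?thesis unfolding in_F_def using F_coproduct[OF Fb Fc] by auto
qed

lemma in_F_orbit:
  assumes Ob: "in_F F H Ob \<rho>" and j0: "j0 \<in> Ob" and trans: "\<forall>y\<in>Ob. \<exists>h\<in>H. \<rho> h j0 = y"
  obtains n b e i0 where "F H n b" "bij_betw e {..<n} Ob" "equivariant H n b \<rho> e" "i0 < n" "e i0 = j0"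
    "{h \<in> H. b h i0 = i0} = {h \<in> H. \<rho> h j0 = j0}" "\<forall>j<n. \<exists>h\<in>H. b h i0 = j"
proof -
  obtain n b e where Fb: "F H n b" and e: "bij_betw e {..<n} Ob" and eq: "equivariant H n b \<rho> e"
    using Ob unfolding in_F_def by blast
  have act: "acts_on G H {..<n} b" using F_fin_hset[OF Fb] by (simp add: fin_hset_iff_acts_on)
  define i0 where "i0 = inv_into {..<n} e j0"
  have i0: "i0 < n" "e i0 = j0" unfolding i0_def using e j0
    by (auto simp: bij_betw_def inv_into_into f_inv_into_f)
  have e_inj: "x = y" if "x < n" "y < n" "e x = e y" for x y
    using e that by (auto simp: bij_betw_def inj_on_def)
  have e_b: "e (b h i0) = \<rho> h j0" if "h \<in> H" for h using eq that i0 unfolding equivariant_def by simp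
  have b_less: "b h i0 < n" if "h \<in> H" for h using acts_on_closed[OF act that] i0(1) by simp
  have "b h i0 = i0 \<longleftrightarrow> \<rho> h j0 = j0" if h: "h \<in> H" for h
    using e_b[OF h] e_inj[OF b_less[OF h] i0(1)] i0(2) by auto
  hence "{h \<in> H. b h i0 = i0} = {h \<in> H. \<rho> h j0 = j0}" by blast
  moreover have "\<forall>j<n. \<exists>h\<in>H. b h i0 = j"
  proof (intro allI impI)
    fix j assume j: "j < n"
    then obtain h where h: "h \<in> H" "\<rho> h j0 = e j" using trans e by (auto simp: bij_betw_def)
    thus "\<exists>h\<in>H. b h i0 = j" using e_b e_inj[OF b_less[OF h(1)] j] by auto
  qed
  ultimately show ?thesis using that Fb e eq i0 by blast
qed

text \<open>The self-induction axiom, with \<open>H \<times>\<^sub>K T\<close> presented through an equivariant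
  projection \<open>q\<close> onto the orbit \<open>Ob \<cong> H/K\<close>.\<close>
lemma in_F_self_induction:
  assumes Ob: "in_F F H Ob \<rho>" and j0: "j0 \<in> Ob" and trans: "\<forall>y\<in>Ob. \<exists>h\<in>H. \<rho> h j0 = y"
    and act: "acts_on G H X a" and fin: "finite X"
    and q: "q ` X \<subseteq> Ob" and q_eq: "\<forall>h\<in>H. \<forall>y\<in>X. q (a h y) = \<rho> h (q y)"
    and fibre: "in_F F {h \<in> H. \<rho> h j0 = j0} {y \<in> X. q y = j0} a"
  shows "in_F F H X a"
proof -
  define K where "K = {h \<in> H. \<rho> h j0 = j0}"
  obtain p c e i0 where Fc: "F H p c" and e: "bij_betw e {..<p} Ob" and eq_c: "equivariant H p c \<rho> e"
    and i0: "i0 < p" "e i0 = j0" and stab: "{h \<in> H. c h i0 = i0} = K" and trans_c: "\<forall>j<p. \<exists>h\<in>H. c h i0 = j"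
    using in_F_orbit[OF Ob j0 trans] unfolding K_def by blast
  have act_c: "acts_on G H {..<p} c" using F_fin_hset[OF Fc] by (simp add: fin_hset_iff_acts_on)
  obtain m b eF where Fb: "F K m b" and eF: "bij_betw eF {..<m} {y \<in> X. q y = j0}"
    and eq_b: "equivariant K m b a eF"
    using fibre unfolding in_F_def K_def by blast
  define n where "n = card X"
  obtain eX where eX: "bij_betw eX {..<n} X"
    using ex_bij_betw_nat_finite[OF fin] atLeast0LessThan unfolding n_def by metis
  define x where "x = (\<lambda>h i. inv_into {..<n} eX (a h (eX i)))"
  have fin_x: "fin_hset G H n x" and eq_x: "\<forall>h\<in>H. \<forall>i<n. eX (x h i) = a h (eX i)"
    using fin_hset_pullback[OF act eX] unfolding x_def by auto
  have eX_in: "eX i \<in> X" if "i < n" for i using eX that by (auto simp: bij_betw_def)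
  have eX_inv: "eX (inv_into {..<n} eX y) = y" if "y \<in> X" for y
    using eX that by (simp add: bij_betw_inv_into_right)
  have c_less: "\<forall>h\<in>H. \<forall>i<p. c h i < p" using acts_on_closed[OF act_c] by simp
  define \<pi> where "\<pi> i = inv_into {..<p} e (q (eX i))" for i
  have \<pi>_less: "\<pi> ` {..<n} \<subseteq> {..<p}" and eq_\<pi>: "equivariant H n x c \<pi>"
    unfolding \<pi>_def using equivariant_in_coordinates[OF e eq_c c_less eX eq_x q q_eq] by auto
  have "bij_betw (inv_into {..<n} eX \<circ> eF) {..<m} {i. i < n \<and> \<pi> i = i0}"
  proof -
    have "\<pi> i = i0 \<longleftrightarrow> q (eX i) = j0" if "i < n" for i
    proof -
      have "q (eX i) \<in> Ob" using q eX_in[OF that] by blast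
      thus ?thesis using e i0 unfolding \<pi>_def
        by (metis bij_betw_inv_into_left bij_betw_inv_into_right lessThan_iff)
    qed
    hence "{i. i < n \<and> \<pi> i = i0} = {i. i < n \<and> eX i \<in> {y \<in> X. q y = j0}}"
      using eX_in by blast
    moreover have "eX ` {i. i < n \<and> eX i \<in> {y \<in> X. q y = j0}} = {y \<in> X. q y = j0}"
      using eX by (force simp: bij_betw_def)
    hence "bij_betw (inv_into {..<n} eX) {y \<in> X. q y = j0} {i. i < n \<and> eX i \<in> {y \<in> X. q y = j0}}"
      by (intro bij_betw_inv_into_subset[OF eX]) auto
    ultimately show ?thesis using eF by (simp add: bij_betw_trans)
  qed
  moreover have "equivariant K m b x (inv_into {..<n} eX \<circ> eF)" unfolding equivariant_def
  proof (intro ballI allI impI)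
    fix h i assume h: "h \<in> K" and i: "i < m"
    have "eF i \<in> X" using eF i by (auto simp: bij_betw_def)
    thus "(inv_into {..<n} eX \<circ> eF) (b h i) = x h ((inv_into {..<n} eX \<circ> eF) i)"
      using eq_b h i eX_inv unfolding equivariant_def x_def by simp
  qed
  ultimately have "F H n x"
    using F_self_induction[OF F_fin_hset[OF Fc] Fc i0(1) stab trans_c Fb fin_x \<pi>_less eq_\<pi>] by blast
  thus ?thesis unfolding in_F_def equivariant_def using eX eq_x by blast
qed

lemma in_F_fibred:
  assumes P: "in_F F H P \<rho>" and act: "acts_on G H X a" and fin: "finite X"
    and q: "q ` X \<subseteq> P" and q_eq: "\<forall>h\<in>H. \<forall>y\<in>X. q (a h y) = \<rho> h (q y)"
    and fibres: "\<forall>j\<in>P. in_F F {h \<in> H. \<rho> h j = j} {y \<in> X. q y = j} a"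
  shows "in_F F H X a"
proof -
  have act_P: "acts_on G H P \<rho>" using P by (rule in_F_acts_on)
  have sg: "subgroup H G" using act by (rule acts_on_subgroup)
  have preimage_inv: "\<forall>h\<in>H. \<forall>y\<in>{y \<in> X. q y \<in> S}. a h y \<in> {y \<in> X. q y \<in> S}"
    if "\<forall>h\<in>H. \<forall>j\<in>S. \<rho> h j \<in> S" for S
    using that q_eq acts_on_closed[OF act] by auto
  have "in_F F H {y \<in> X. q y \<in> P} a"
  proof (rule invariant_subset_induct[OF act_P in_F_finite[OF P] subset_refl, where Q = "\<lambda>S. in_F F H {y \<in> X. q y \<in> S} a"])
    show "\<forall>h\<in>H. \<forall>x\<in>P. \<rho> h x \<in> P" using acts_on_closed[OF act_P] by blast
    show "in_F F H {y \<in> X. q y \<in> {}} a" using in_F_trivial[OF sg] by simp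
  next
    fix j assume j: "j \<in> P"
    let ?Ob = "orbit H \<rho> j" and ?X = "{y \<in> X. q y \<in> orbit H \<rho> j}"
    have Ob_inv: "\<forall>h\<in>H. \<forall>j'\<in>?Ob. \<rho> h j' \<in> ?Ob" using orbit_invariant[OF act_P j] by blast
    show "in_F F H ?X a"
    proof (rule in_F_self_induction)
      show "in_F F H ?Ob \<rho>" using in_F_subset[OF P orbit_subset[OF act_P j] Ob_inv] .
      show "j \<in> ?Ob" using in_orbit[OF act_P j] .
      show "\<forall>y\<in>?Ob. \<exists>h\<in>H. \<rho> h j = y" unfolding orbit_def by blast
      show "acts_on G H ?X a"
        using acts_on_restrict[OF act sg subset_refl _ preimage_inv[OF Ob_inv]] by blast
      show "finite ?X" using fin by simp
      show "q ` ?X \<subseteq> ?Ob" by blast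
      show "\<forall>h\<in>H. \<forall>y\<in>?X. q (a h y) = \<rho> h (q y)" using q_eq by blast
      have "{y \<in> ?X. q y = j} = {y \<in> X. q y = j}" using in_orbit[OF act_P j] by blast
      thus "in_F F {h \<in> H. \<rho> h j = j} {y \<in> ?X. q y = j} a" using fibres j by simp
    qed
  next
    fix A B assume "A \<inter> B = {}" "in_F F H {y \<in> X. q y \<in> A} a" "in_F F H {y \<in> X. q y \<in> B} a"
    moreover have "{y \<in> X. q y \<in> A} \<inter> {y \<in> X. q y \<in> B} = {}" using \<open>A \<inter> B = {}\<close> by blast
    ultimately have "in_F F H ({y \<in> X. q y \<in> A} \<union> {y \<in> X. q y \<in> B}) a" by (intro in_F_union)
    moreover have "{y \<in> X. q y \<in> A \<union> B} = {y \<in> X. q y \<in> A} \<union> {y \<in> X. q y \<in> B}" by blast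
    ultimately show "in_F F H {y \<in> X. q y \<in> A \<union> B} a" by simp
  qed
  moreover have "{y \<in> X. q y \<in> P} = X" using q by blast
  ultimately show ?thesis by simp
qed

end

section \<open>Identification of trees\<close>

lemma leaves_tact: "leaves (tact G g \<pi> t) = map \<pi> (leaves t)"
  by (induction t) (auto simp: map_concat intro!: arg_cong[where f=concat] map_cong)

lemma leaves_Node_permutes:
  assumes \<tau>: "\<tau> permutes {..<length ts}"
  shows "set (leaves (Node x g \<tau> ts)) = (\<Union>j<length ts. set (leaves (ts ! \<tau> j)))"
    and "distinct (leaves (Node x g \<tau> ts)) \<Longrightarrow> j < length ts \<Longrightarrow> distinct (leaves (ts ! \<tau> j))"
    and "distinct (leaves (Node x g \<tau> ts)) \<Longrightarrow> j < length ts \<Longrightarrow> j' < length ts \<Longrightarrow> j \<noteq> j'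
      \<Longrightarrow> set (leaves (ts ! \<tau> j)) \<inter> set (leaves (ts ! \<tau> j')) = {}"
proof -
  show "set (leaves (Node x g \<tau> ts)) = (\<Union>j<length ts. set (leaves (ts ! \<tau> j)))"
    using set_conv_nth_permutes[OF \<tau>] by auto
  have \<tau>_less: "\<tau> j < length ts" if "j < length ts" for j using permutes_in_image[OF \<tau>] that by simp
  show "distinct (leaves (ts ! \<tau> j))" if "distinct (leaves (Node x g \<tau> ts))" "j < length ts"
    using distinct_concat_nth[of "map leaves ts" "\<tau> j"] that \<tau>_less by simp
  show "set (leaves (ts ! \<tau> j)) \<inter> set (leaves (ts ! \<tau> j')) = {}"
    if "distinct (leaves (Node x g \<tau> ts))" "j < length ts" "j' < length ts" "j \<noteq> j'"
  proof -
    have "\<tau> j \<noteq> \<tau> j'" using that(4) permutes_inj[OF \<tau>] by (meson injD)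
    thus ?thesis using distinct_concat_nth_disjoint[of "map leaves ts" "\<tau> j" "\<tau> j'"] that \<tau>_less by simp
  qed
qed

text \<open>A structural description of \<open>feq\<close> on valid trees (see \<open>feq_imp_tree_sim\<close>): the
  roots carry the same generator up to one coset step \<open>(g, \<tau>) \<mapsto> (g h, \<tau> \<sigma>(h))\<close>, and the
  subtrees plugged into corresponding inputs are again related.\<close>
inductive tree_sim :: "'g monoid \<Rightarrow> 'i set \<Rightarrow> ('i \<Rightarrow> 'g set) \<Rightarrow> ('i \<Rightarrow> nat \<times> ('g \<Rightarrow> nat \<Rightarrow> nat))
    \<Rightarrow> ('i, 'g) ftree \<Rightarrow> ('i, 'g) ftree \<Rightarrow> bool" for G I grp dat where
  leaf: "tree_sim G I grp dat (Leaf j) (Leaf j)"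
| node: "\<lbrakk> nodes_ok G I dat (Node x g1 \<tau>1 ts1); nodes_ok G I dat (Node x g2 \<tau>2 ts2);
          h \<in> tag_grp G grp x; g2 = g1 \<otimes>\<^bsub>G\<^esub> h;
          \<forall>j<length ts1. tree_sim G I grp dat (ts2 ! \<tau>2 j) (ts1 ! \<tau>1 (tag_perm dat x h j)) \<rbrakk>
        \<Longrightarrow> tree_sim G I grp dat (Node x g1 \<tau>1 ts1) (Node x g2 \<tau>2 ts2)"

inductive_cases nodes_ok_NodeE: "nodes_ok G I dat (Node x g \<tau> ts)"

locale SM_setting = idx_system +
  fixes ord :: "'g set \<times> 'g set \<Rightarrow> nat \<times> ('g \<Rightarrow> nat \<Rightarrow> nat)"
  assumes ord_orbit: "\<forall>HK \<in> O_index G F. is_orbit G (fst HK) (snd HK) (fst (ord HK)) (snd (ord HK))"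
begin

abbreviation "valid \<equiv> nodes_ok G (O_index G F) ord"
abbreviation "sim \<equiv> tree_sim G (O_index G F) fst ord"
abbreviation "ident \<equiv> feq G (O_index G F) fst ord"

lemma valid_NodeD:
  assumes "valid (Node x g \<tau> ts)"
  shows "tag_valid (O_index G F) x" "g \<in> carrier G" "\<tau> permutes {..<length ts}"
    "length ts = tag_ar ord x" "\<forall>t\<in>set ts. valid t"
  using assms by (auto elim: nodes_ok_NodeE)

lemma tag_acts_on:
  assumes "tag_valid (O_index G F) x"
  shows "acts_on G (tag_grp G fst x) {..<tag_ar ord x} (tag_perm ord x)"
proof (cases x)
  case (Ex i)
  hence i: "i \<in> O_index G F" using assms by simp
  hence "subgroup (fst i) G" unfolding O_index_def by auto
  moreover have "fin_hset G (fst i) (fst (ord i)) (snd (ord i))"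
    using ord_orbit i unfolding is_orbit_def by blast
  ultimately show ?thesis unfolding acts_on_def fin_hset_def Ex by (auto simp: subgroup.m_closed)
qed (auto simp: acts_on_def subgroup_self)

lemma tag_perm_permutes:
  assumes x: "tag_valid (O_index G F) x" and h: "h \<in> tag_grp G fst x"
  shows "tag_perm ord x h permutes {..<tag_ar ord x}"
proof (rule bij_imp_permutes)
  note act = tag_acts_on[OF x]
  have ih: "inv h \<in> tag_grp G fst x" using subgroup.m_inv_closed[OF acts_on_subgroup[OF act] h] .
  show "bij_betw (tag_perm ord x h) {..<tag_ar ord x} {..<tag_ar ord x}"
    by (rule bij_betw_byWitness[where f'="tag_perm ord x (inv h)"])
      (use acts_on_inv[OF act h] acts_on_closed[OF act h] acts_on_closed[OF act ih] in auto)
  show "tag_perm ord x h j = j" if "j \<notin> {..<tag_ar ord x}" for j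
    using that by (cases x) auto
qed

lemma tree_sim_valid: "sim s t \<Longrightarrow> valid s \<and> valid t"
  by (induction rule: tree_sim.induct) (auto intro: nodes_ok.leaf)

lemma tree_sim_refl: "valid t \<Longrightarrow> sim t t"
proof (induction t rule: nodes_ok.induct)
  case (leaf j)
  show ?case by (rule tree_sim.leaf)
next
  case (node x g \<tau> ts)
  have ok: "valid (Node x g \<tau> ts)" using node.hyps node.IH by (intro nodes_ok.node) auto
  note act = tag_acts_on[OF node.hyps(1)]
  show ?case
  proof (rule tree_sim.node[OF ok ok subgroup.one_closed[OF acts_on_subgroup[OF act]]])
    show "g = g \<otimes> \<one>" using node.hyps(2) by simp
    show "\<forall>j<length ts. sim (ts ! \<tau> j) (ts ! \<tau> (tag_perm ord x \<one> j))"
      using acts_on_one[OF act] node.IH node.hyps(3,4) permutes_in_image[OF node.hyps(3)] by auto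
  qed
qed

lemma tree_sim_sym: "sim s t \<Longrightarrow> sim t s"
proof (induction rule: tree_sim.induct)
  case (leaf j)
  show ?case by (rule tree_sim.leaf)
next
  case (node x g1 \<tau>1 ts1 g2 \<tau>2 ts2 h)
  note act = tag_acts_on[OF valid_NodeD(1)[OF node.hyps(1)]]
  have hG: "h \<in> carrier G" using subgroup.mem_carrier[OF acts_on_subgroup[OF act] node.hyps(3)] .
  have ih: "inv h \<in> tag_grp G fst x" using subgroup.m_inv_closed[OF acts_on_subgroup[OF act] node.hyps(3)] .
  have len: "length ts1 = tag_ar ord x" "length ts2 = tag_ar ord x"
    using valid_NodeD(4)[OF node.hyps(1)] valid_NodeD(4)[OF node.hyps(2)] by auto
  show ?case
  proof (rule tree_sim.node[OF node.hyps(2,1) ih])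
    show "g1 = g2 \<otimes> inv h" using node.hyps(4) valid_NodeD(2)[OF node.hyps(1)] hG by (simp add: m_assoc)
    show "\<forall>j<length ts2. sim (ts1 ! \<tau>1 j) (ts2 ! \<tau>2 (tag_perm ord x (inv h) j))"
    proof (intro allI impI)
      fix j assume j: "j < length ts2"
      define j' where "j' = tag_perm ord x (inv h) j"
      have "j' < length ts1" unfolding j'_def using acts_on_closed[OF act ih] j len by auto
      moreover have "tag_perm ord x h j' = j" unfolding j'_def using acts_on_inv(2)[OF act node.hyps(3)] j len by simp
      ultimately show "sim (ts1 ! \<tau>1 j) (ts2 ! \<tau>2 j')" using node.IH by metis
    qed
  qed
qed

lemma tree_sim_trans: "sim s t \<Longrightarrow> sim t u \<Longrightarrow> sim s u"
proof (induction t arbitrary: s u)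
  case (Leaf j)
  thus ?case by (auto elim: tree_sim.cases)
next
  case (Node x g2 \<tau>2 ts2)
  obtain g1 \<tau>1 ts1 h where s: "s = Node x g1 \<tau>1 ts1" and ok1: "valid s" and ok2: "valid (Node x g2 \<tau>2 ts2)"
    and h: "h \<in> tag_grp G fst x" and g2: "g2 = g1 \<otimes> h"
    and st: "\<forall>j<length ts1. sim (ts2 ! \<tau>2 j) (ts1 ! \<tau>1 (tag_perm ord x h j))"
    using Node.prems(1) by (auto elim: tree_sim.cases)
  obtain g3 \<tau>3 ts3 h' where u: "u = Node x g3 \<tau>3 ts3" and ok3: "valid u"
    and h': "h' \<in> tag_grp G fst x" and g3: "g3 = g2 \<otimes> h'"
    and tu: "\<forall>j<length ts2. sim (ts3 ! \<tau>3 j) (ts2 ! \<tau>2 (tag_perm ord x h' j))"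
    using Node.prems(2) by (auto elim: tree_sim.cases)
  note act = tag_acts_on[OF valid_NodeD(1)[OF ok2]]
  have sg: "subgroup (tag_grp G fst x) G" using act by (rule acts_on_subgroup)
  have len: "length ts1 = tag_ar ord x" "length ts2 = tag_ar ord x"
    using valid_NodeD(4) ok1 ok2 s by auto
  show ?case unfolding s u
  proof (rule tree_sim.node[OF ok1[unfolded s] ok3[unfolded u] subgroup.m_closed[OF sg h h']])
    show "g3 = g1 \<otimes> (h \<otimes> h')"
      using g2 g3 valid_NodeD(2) ok1 s subgroup.mem_carrier[OF sg] h h' by (simp add: m_assoc)
    show "\<forall>j<length ts1. sim (ts3 ! \<tau>3 j) (ts1 ! \<tau>1 (tag_perm ord x (h \<otimes> h') j))"
    proof (intro allI impI)
      fix j assume j: "j < length ts1"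
      define j' where "j' = tag_perm ord x h' j"
      have j': "j' < length ts2" unfolding j'_def using acts_on_closed[OF act h'] j len by auto
      have "tag_perm ord x (h \<otimes> h') j = tag_perm ord x h j'"
        unfolding j'_def using acts_on_mult[OF act h h'] j len by simp
      moreover have "ts2 ! \<tau>2 j' \<in> set ts2"
        using permutes_in_image[OF valid_NodeD(3)[OF ok2]] j' by simp
      ultimately show "sim (ts3 ! \<tau>3 j) (ts1 ! \<tau>1 (tag_perm ord x (h \<otimes> h') j))"
        using Node.IH tu st j j' len unfolding j'_def by metis
    qed
  qed
qed

lemma feq_imp_tree_sim: "ident s t \<Longrightarrow> valid s \<or> valid t \<Longrightarrow> sim s t"
proof (induction rule: feq.induct)
  case (refl t)
  thus ?case using tree_sim_refl by blast
next
  case (sym s t)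
  thus ?case using tree_sim_sym by blast
next
  case (trans s t u)
  thus ?case using tree_sim_trans tree_sim_valid by metis
next
  case (cong ts us x g \<tau>)
  have len: "length ts = length us" using cong.IH by (rule list_all2_lengthD)
  have pw: "sim (ts ! i) (us ! i)" if "i < length ts" "valid (ts ! i) \<or> valid (us ! i)" for i
    using cong.IH that by (auto simp: list_all2_conv_all_nth)
  have "(\<forall>t\<in>set ts. valid t) \<longleftrightarrow> (\<forall>t\<in>set us. valid t)"
    using pw tree_sim_valid len by (metis in_set_conv_nth)
  hence ok: "valid (Node x g \<tau> ts)" "valid (Node x g \<tau> us)"
    using cong.prems len by (auto elim!: nodes_ok_NodeE intro!: nodes_ok.node)
  note act = tag_acts_on[OF valid_NodeD(1)[OF ok(1)]]
  show ?case
  proof (rule tree_sim.node[OF ok subgroup.one_closed[OF acts_on_subgroup[OF act]]])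
    show "g = g \<otimes> \<one>" using valid_NodeD(2)[OF ok(1)] by simp
    show "\<forall>j<length ts. sim (us ! \<tau> j) (ts ! \<tau> (tag_perm ord x \<one> j))"
    proof (intro allI impI)
      fix j assume j: "j < length ts"
      have \<tau>j: "\<tau> j < length ts" using permutes_in_image[OF valid_NodeD(3)[OF ok(1)]] j by simp
      hence "sim (ts ! \<tau> j) (us ! \<tau> j)" using pw valid_NodeD(5)[OF ok(1)] by simp
      moreover have "tag_perm ord x \<one> j = j" using acts_on_one[OF act] j valid_NodeD(4)[OF ok(1)] by simp
      ultimately show "sim (us ! \<tau> j) (ts ! \<tau> (tag_perm ord x \<one> j))" using tree_sim_sym by simp
    qed
  qed
next
  case (coset x g \<tau> ts h)
  note ok = coset.hyps(1)
  note act = tag_acts_on[OF valid_NodeD(1)[OF ok]]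
  have sg: "subgroup (tag_grp G fst x) G" using act by (rule acts_on_subgroup)
  have hG: "h \<in> carrier G" using subgroup.mem_carrier[OF sg coset.hyps(2)] .
  have "tag_perm ord x h permutes {..<length ts}"
    using tag_perm_permutes[OF valid_NodeD(1)[OF ok] coset.hyps(2)] valid_NodeD(4)[OF ok] by simp
  hence ok': "valid (Node x (g \<otimes> h) (\<tau> \<circ> tag_perm ord x h) ts)"
    using ok hG by (auto elim!: nodes_ok_NodeE intro!: nodes_ok.node permutes_compose)
  show ?case
  proof (rule tree_sim.node[OF ok' ok subgroup.m_inv_closed[OF sg coset.hyps(2)]])
    show "g = g \<otimes> h \<otimes> inv h" using valid_NodeD(2)[OF ok] hG by (simp add: m_assoc)
    show "\<forall>j<length ts. sim (ts ! \<tau> j) (ts ! (\<tau> \<circ> tag_perm ord x h) (tag_perm ord x (inv h) j))"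
      using acts_on_inv(2)[OF act coset.hyps(2)] valid_NodeD(4,5)[OF ok] tree_sim_refl
        permutes_in_image[OF valid_NodeD(3)[OF ok]] by auto
  qed
next
  case (sigma x g \<tau> ts \<rho>)
  note ok = sigma.hyps(1)
  note act = tag_acts_on[OF valid_NodeD(1)[OF ok]]
  have \<rho>_less: "\<rho> j < length ts" if "j < length ts" for j
    using permutes_in_image[OF sigma.hyps(2)] that by simp
  have \<tau>_less: "\<tau> j < length ts" if "j < length ts" for j
    using permutes_in_image[OF valid_NodeD(3)[OF ok]] that by simp
  have ok1: "valid (Node x g (\<rho> \<circ> \<tau>) ts)"
    using ok sigma.hyps(2) by (auto elim!: nodes_ok_NodeE intro!: nodes_ok.node permutes_compose)
  have ok2: "valid (Node x g \<tau> (map (\<lambda>j. ts ! \<rho> j) [0..<length ts]))"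
    using ok \<rho>_less by (auto elim!: nodes_ok_NodeE intro!: nodes_ok.node)
  show ?case
  proof (rule tree_sim.node[OF ok1 ok2 subgroup.one_closed[OF acts_on_subgroup[OF act]]])
    show "g = g \<otimes> \<one>" using valid_NodeD(2)[OF ok] by simp
    show "\<forall>j<length ts. sim (map (\<lambda>j. ts ! \<rho> j) [0..<length ts] ! \<tau> j)
        (ts ! (\<rho> \<circ> \<tau>) (tag_perm ord x \<one> j))"
      using acts_on_one[OF act] valid_NodeD(4,5)[OF ok] tree_sim_refl \<rho>_less \<tau>_less by auto
  qed
qed

lemma tree_sim_leaves: "sim s t \<Longrightarrow> set (leaves s) = set (leaves t)"
proof (induction rule: tree_sim.induct)
  case (leaf j)
  show ?case by simp
next
  case (node x g1 \<tau>1 ts1 g2 \<tau>2 ts2 h)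
  have "tag_perm ord x h permutes {..<length ts1}"
    using tag_perm_permutes[OF valid_NodeD(1)[OF node.hyps(1)] node.hyps(3)] valid_NodeD(4)[OF node.hyps(1)]
    by simp
  hence p1: "\<tau>1 \<circ> tag_perm ord x h permutes {..<length ts1}"
    using valid_NodeD(3)[OF node.hyps(1)] by (rule permutes_compose)
  have p2: "\<tau>2 permutes {..<length ts2}" using valid_NodeD(3)[OF node.hyps(2)] .
  have len: "length ts1 = length ts2" using valid_NodeD(4) node.hyps(1,2) by simp
  have "set (leaves (Node x g1 \<tau>1 ts1)) = (\<Union>j<length ts1. set (leaves (ts1 ! \<tau>1 (tag_perm ord x h j))))"
    using set_conv_nth_permutes[OF p1] by simp
  also have "\<dots> = (\<Union>j<length ts2. set (leaves (ts2 ! \<tau>2 j)))" using node.IH len by auto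
  also have "\<dots> = set (leaves (Node x g2 \<tau>2 ts2))" using set_conv_nth_permutes[OF p2] by simp
  finally show ?case .
qed

section \<open>Leaves of fixed trees are admissible\<close>

lemma F_ord: "i \<in> O_index G F \<Longrightarrow> F (fst i) (fst (ord i)) (snd (ord i))"
proof -
  assume i: "i \<in> O_index G F"
  obtain H K where "i = (H, K)" by (cases i)
  then obtain p c where c: "is_orbit G (fst i) (snd i) p c" and Fc: "F (fst i) p c"
    using i unfolding O_index_def by auto
  have d: "is_orbit G (fst i) (snd i) (fst (ord i)) (snd (ord i))" using ord_orbit i by blast
  obtain f where "bij_betw f {..<p} {..<fst (ord i)}" "equivariant (fst i) p c (snd (ord i)) f"
    using is_orbit_iso[OF c d] by blast
  hence "in_F F (fst i) {..<fst (ord i)} (snd (ord i))"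
    using in_F_iso[OF in_F_lessThan[OF Fc]] unfolding equivariant_def by blast
  thus ?thesis using d in_F_iff_F unfolding is_orbit_def by blast
qed

lemma in_F_tag:
  assumes x: "tag_valid (O_index G F) x" and g: "g \<in> carrier G" and sg: "subgroup H G"
    and conj: "\<forall>h\<in>H. inv g \<otimes> h \<otimes> g \<in> tag_grp G fst x"
  shows "in_F F H {..<tag_ar ord x} (\<lambda>h. tag_perm ord x (inv g \<otimes> h \<otimes> g))"
proof (cases x)
  case (Ex i)
  hence "F H (fst (ord i)) (\<lambda>h. snd (ord i) (inv g \<otimes> h \<otimes> g))"
    using F_conj_pullback[OF F_ord sg g] x conj by simp
  from in_F_iso[OF in_F_lessThan[OF this] bij_betw_id] show ?thesis using Ex by simp
qed (use in_F_trivial[OF sg] in auto)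

lemma fixed_node:
  assumes ok: "valid (Node x g \<tau> ts)" and sg: "subgroup H G" and h: "h \<in> H"
    and fixed: "\<forall>h\<in>H. sim (tact G h (a h) (Node x g \<tau> ts)) (Node x g \<tau> ts)"
  shows "inv g \<otimes> h \<otimes> g \<in> tag_grp G fst x"
    and "\<forall>j<length ts. sim (ts ! \<tau> j) (tact G (inv h) (a (inv h)) (ts ! \<tau> (tag_perm ord x (inv g \<otimes> h \<otimes> g) j)))"
proof -
  have ih: "inv h \<in> H" using subgroup.m_inv_closed[OF sg h] .
  have hG: "h \<in> carrier G" using subgroup.mem_carrier[OF sg h] .
  have gG: "g \<in> carrier G" using valid_NodeD(2)[OF ok] .
  let ?ts = "map (tact G (inv h) (a (inv h))) ts"
  have "sim (Node x (inv h \<otimes> g) \<tau> ?ts) (Node x g \<tau> ts)"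
    using fixed ih by simp
  then obtain k where k: "k \<in> tag_grp G fst x" and gk: "g = inv h \<otimes> g \<otimes> k"
    and ch: "\<forall>j<length ts. sim (ts ! \<tau> j) (?ts ! \<tau> (tag_perm ord x k j))"
    by (elim tree_sim.cases) auto
  note act = tag_acts_on[OF valid_NodeD(1)[OF ok]]
  have "\<tau> (tag_perm ord x k j) < length ts" if "j < length ts" for j
    using permutes_in_image[OF valid_NodeD(3)[OF ok]] acts_on_closed[OF act k] that valid_NodeD(4)[OF ok]
    by simp
  hence children: "\<forall>j<length ts. sim (ts ! \<tau> j) (tact G (inv h) (a (inv h)) (ts ! \<tau> (tag_perm ord x k j)))"
    using ch by simp
  have "k \<in> carrier G"
    using subgroup.mem_carrier[OF acts_on_subgroup[OF act] k] .
  hence "k = inv g \<otimes> h \<otimes> g"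
    using gk gG hG by (metis inv_closed m_closed inv_solve_left' inv_mult_group inv_inv m_assoc)
  thus "inv g \<otimes> h \<otimes> g \<in> tag_grp G fst x"
    and "\<forall>j<length ts. sim (ts ! \<tau> j) (tact G (inv h) (a (inv h)) (ts ! \<tau> (tag_perm ord x (inv g \<otimes> h \<otimes> g) j)))"
    using k children by simp_all
qed

lemma fixed_node_child:
  assumes ok: "valid (Node x g \<tau> ts)" and sg: "subgroup H G" and h: "h \<in> H"
    and fixed: "\<forall>h\<in>H. sim (tact G h (a h) (Node x g \<tau> ts)) (Node x g \<tau> ts)"
    and j: "j < length ts" and stab: "tag_perm ord x (inv g \<otimes> h \<otimes> g) j = j"
  shows "sim (tact G h (a h) (ts ! \<tau> j)) (ts ! \<tau> j)"
proof -
  let ?k = "inv g \<otimes> h \<otimes> g"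
  note act = tag_acts_on[OF valid_NodeD(1)[OF ok]]
  have k: "?k \<in> tag_grp G fst x" using fixed_node(1)[OF ok sg h fixed] .
  have hG: "h \<in> carrier G" using subgroup.mem_carrier[OF sg h] .
  have "inv ?k = inv g \<otimes> inv h \<otimes> g"
    using valid_NodeD(2)[OF ok] hG by (simp add: inv_mult_group m_assoc)
  moreover have "tag_perm ord x (inv ?k) j = j"
    using acts_on_inv(1)[OF act k] stab j valid_NodeD(4)[OF ok] by (metis lessThan_iff)
  ultimately have perm: "tag_perm ord x (inv g \<otimes> inv h \<otimes> g) j = j" by simp
  have "sim (ts ! \<tau> j) (tact G h (a h) (ts ! \<tau> (tag_perm ord x (inv g \<otimes> inv h \<otimes> g) j)))"
    using fixed_node(2)[OF ok sg subgroup.m_inv_closed[OF sg h] fixed] j hG by simp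
  hence "sim (ts ! \<tau> j) (tact G h (a h) (ts ! \<tau> j))" by (simp only: perm)
  thus ?thesis by (rule tree_sim_sym)
qed

lemma sim_fixed_leaves_in_F:
  "\<lbrakk>valid t; distinct (leaves t); acts_on G H (set (leaves t)) a;
    \<forall>h\<in>H. sim (tact G h (a h) t) t\<rbrakk> \<Longrightarrow> in_F F H (set (leaves t)) a"
proof (induction t arbitrary: H)
  case (Leaf j)
  have "\<forall>h\<in>H. \<forall>y\<in>{j}. a h y = y" using acts_on_closed[OF Leaf.prems(3)] by fastforce
  thus ?case using in_F_trivial[OF acts_on_subgroup[OF Leaf.prems(3)]] by simp
next
  case (Node x g \<tau> ts)
  note ok = Node.prems(1) and act = Node.prems(3) and fixed = Node.prems(4)
  have sg: "subgroup H G" using act by (rule acts_on_subgroup)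
  define k where "k = length ts"
  define \<rho> where "\<rho> h = tag_perm ord x (inv g \<otimes> h \<otimes> g)" for h
  define Lf where "Lf j = set (leaves (ts ! \<tau> j))" for j
  define q where "q y = (THE j. j \<in> {..<k} \<and> y \<in> Lf j)" for y
  let ?L = "set (leaves (Node x g \<tau> ts))"
  note \<tau> = valid_NodeD(3)[OF ok]
  have child: "ts ! \<tau> j \<in> set ts" if "j < k" for j using permutes_in_image[OF \<tau>] that k_def by simp
  have L_eq: "?L = (\<Union>j<k. Lf j)" using leaves_Node_permutes(1)[OF \<tau>] unfolding Lf_def k_def .
  have disj: "\<forall>j\<in>{..<k}. \<forall>j'\<in>{..<k}. j \<noteq> j' \<longrightarrow> Lf j \<inter> Lf j' = {}"
    using leaves_Node_permutes(3)[OF \<tau> Node.prems(2)] unfolding Lf_def k_def by blast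
  have q: "q y = j" if "j < k" "y \<in> Lf j" for j y
    unfolding q_def using index_of_disjoint_family[OF disj] that by blast
  have in_F_\<rho>: "in_F F H {..<k} \<rho>"
    using in_F_tag[OF valid_NodeD(1,2)[OF ok] sg] fixed_node(1)[OF ok sg _ fixed] valid_NodeD(4)[OF ok]
    unfolding \<rho>_def k_def by simp
  note act_\<rho> = in_F_acts_on[OF in_F_\<rho>]
  have moves: "a h y \<in> Lf (\<rho> h j)" if h: "h \<in> H" and j: "j < k" and y: "y \<in> Lf j" for h j y
  proof -
    have "sim (ts ! \<tau> j) (tact G (inv h) (a (inv h)) (ts ! \<tau> (\<rho> h j)))"
      using fixed_node(2)[OF ok sg h fixed] j unfolding \<rho>_def k_def by blast
    hence "Lf j = a (inv h) ` Lf (\<rho> h j)"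
      unfolding Lf_def using tree_sim_leaves leaves_tact by (metis set_map)
    then obtain z where z: "z \<in> Lf (\<rho> h j)" "y = a (inv h) z" using y by blast
    have "z \<in> ?L" using L_eq acts_on_closed[OF act_\<rho> h] j z(1) by blast
    thus ?thesis using acts_on_inv(2)[OF act h] z by simp
  qed
  have q_eq: "\<forall>h\<in>H. \<forall>y\<in>?L. q (a h y) = \<rho> h (q y)"
    using L_eq moves q acts_on_closed[OF act_\<rho>] by fastforce
  have fibres: "\<forall>j\<in>{..<k}. in_F F {h \<in> H. \<rho> h j = j} {y \<in> ?L. q y = j} a"
  proof
    fix j assume j: "j \<in> {..<k}"
    let ?S = "{h \<in> H. \<rho> h j = j}"
    have sgS: "subgroup ?S G" using stabiliser_subgroup[OF act_\<rho> j] .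
    have fibre: "{y \<in> ?L. q y = j} = Lf j" using L_eq q j by auto
    have "Lf j \<subseteq> ?L" using L_eq j by blast
    moreover have "\<forall>h\<in>?S. \<forall>y\<in>Lf j. a h y \<in> Lf j" using moves j by fastforce
    ultimately have "acts_on G ?S (Lf j) a" using acts_on_restrict[OF act sgS] by blast
    moreover have "\<forall>h\<in>?S. sim (tact G h (a h) (ts ! \<tau> j)) (ts ! \<tau> j)"
      using fixed_node_child[OF ok sg _ fixed] j unfolding \<rho>_def k_def by auto
    moreover have "distinct (leaves (ts ! \<tau> j))"
      using leaves_Node_permutes(2)[OF \<tau> Node.prems(2)] j unfolding k_def by simp
    moreover have "valid (ts ! \<tau> j)" using valid_NodeD(5)[OF ok] child j by blast
    ultimately show "in_F F ?S {y \<in> ?L. q y = j} a"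
      using Node.IH[OF child] j fibre unfolding Lf_def by auto
  qed
  have "q ` ?L \<subseteq> {..<k}" using L_eq q by auto
  thus ?case using in_F_fibred[OF in_F_\<rho> act _ _ q_eq fibres] by simp
qed

section \<open>Admissible sets are leaves of fixed trees\<close>

definition fixed_tree :: "'g set \<Rightarrow> ('g \<Rightarrow> nat \<Rightarrow> nat) \<Rightarrow> nat set \<Rightarrow> ('g set \<times> 'g set, 'g) ftree \<Rightarrow> bool"
  where "fixed_tree H a L t \<longleftrightarrow> valid t \<and> distinct (leaves t) \<and> set (leaves t) = L
           \<and> (\<forall>h\<in>H. ident (tact G h (a h) t) t)"

lemma fixed_tree_imp_in_F:
  assumes t: "fixed_tree H a L t" and act: "acts_on G H L a"
  shows "in_F F H L a"
proof -
  have "\<forall>h\<in>H. sim (tact G h (a h) t) t" using t feq_imp_tree_sim unfolding fixed_tree_def by blast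
  thus ?thesis using sim_fixed_leaves_in_F[of t H a] t act unfolding fixed_tree_def by blast
qed

text \<open>Acting by \<open>h\<close> on a generator is the same as permuting its inputs by \<open>\<sigma>(h)\<close>.\<close>
lemma ident_Node_perm_inputs:
  assumes ok: "valid (Node x \<one> id ts)" and h: "h \<in> tag_grp G fst x"
  shows "ident (Node x h id (map (\<lambda>j. ts ! tag_perm ord x h j) [0..<length ts])) (Node x \<one> id ts)"
proof -
  let ?\<sigma> = "tag_perm ord x h"
  have hG: "h \<in> carrier G"
    using subgroup.mem_carrier[OF acts_on_subgroup[OF tag_acts_on[OF valid_NodeD(1)[OF ok]]] h] .
  have ok_h: "valid (Node x (\<one> \<otimes> h) id ts)" using ok hG by (auto elim!: nodes_ok_NodeE intro!: nodes_ok.node)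
  have "?\<sigma> permutes {..<length ts}"
    using tag_perm_permutes[OF valid_NodeD(1)[OF ok] h] valid_NodeD(4)[OF ok] by simp
  hence "ident (Node x h id (map (\<lambda>j. ts ! ?\<sigma> j) [0..<length ts])) (Node x h ?\<sigma> ts)"
    using feq.sigma[OF ok_h] feq.sym hG by fastforce
  moreover have "ident (Node x h ?\<sigma> ts) (Node x \<one> id ts)"
    using feq.coset[OF ok h] hG by simp
  ultimately show ?thesis by (rule feq.trans)
qed

lemma fixed_tree_empty:
  assumes sg: "subgroup H G"
  shows "fixed_tree H a {} (Node Nul \<one> id [])"
proof -
  have ok: "valid (Node Nul \<one> id [])" by (auto intro: nodes_ok.node permutes_id)
  have "ident (Node Nul h id []) (Node Nul \<one> id [])" if "h \<in> H" for h
    using ident_Node_perm_inputs[OF ok, of h] subgroup.mem_carrier[OF sg that] by simp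
  thus ?thesis using ok subgroup.mem_carrier[OF sg] unfolding fixed_tree_def by simp
qed

lemma fixed_tree_union:
  assumes t1: "fixed_tree H a A t1" and t2: "fixed_tree H a B t2" and disj: "A \<inter> B = {}"
    and sg: "subgroup H G"
  shows "fixed_tree H a (A \<union> B) (Node Bin \<one> id [t1, t2])"
proof -
  let ?t = "Node Bin \<one> id [t1, t2]"
  have ok: "valid ?t" using t1 t2 unfolding fixed_tree_def by (auto intro!: nodes_ok.node permutes_id)
  have "ident (tact G h (a h) ?t) ?t" if h: "h \<in> H" for h
  proof -
    have "ident (Node Bin h id [tact G h (a h) t1, tact G h (a h) t2]) (Node Bin h id [t1, t2])"
      using t1 t2 h unfolding fixed_tree_def by (auto intro!: feq.cong)
    moreover have "ident (Node Bin h id [t1, t2]) ?t"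
      using ident_Node_perm_inputs[OF ok, of h] subgroup.mem_carrier[OF sg h] by (simp add: upt_rec)
    ultimately have "ident (Node Bin h id [tact G h (a h) t1, tact G h (a h) t2]) ?t" by (rule feq.trans)
    thus ?thesis using subgroup.mem_carrier[OF sg h] by simp
  qed
  moreover have "distinct (leaves ?t)" "set (leaves ?t) = A \<union> B"
    using t1 t2 disj unfolding fixed_tree_def by auto
  ultimately show ?thesis using ok unfolding fixed_tree_def by blast
qed

lemma fixed_tree_orbit:
  assumes Ob: "in_F F H Ob a" and j0: "j0 \<in> Ob" and trans: "\<forall>y\<in>Ob. \<exists>h\<in>H. a h j0 = y"
    and proper: "{h \<in> H. a h j0 = j0} \<noteq> H"
  shows "\<exists>t. fixed_tree H a Ob t"
proof -
  note act = in_F_acts_on[OF Ob]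
  have sg: "subgroup H G" using act by (rule acts_on_subgroup)
  define K where "K = {h \<in> H. a h j0 = j0}"
  obtain n b e i0 where Fb: "F H n b" and e: "bij_betw e {..<n} Ob" and eq_e: "equivariant H n b a e"
    and i0: "i0 < n" and stab: "{h \<in> H. b h i0 = i0} = K" and trans_b: "\<forall>j<n. \<exists>h\<in>H. b h i0 = j"
    by (rule in_F_orbit[OF Ob j0 trans, folded K_def])
  have orbit_b: "is_orbit G H K n b"
    unfolding is_orbit_def using F_fin_hset[OF Fb] i0 stab trans_b by blast
  have "subgroup K G" "K \<subset> H" using stabiliser_subgroup[OF act j0] proper unfolding K_def by auto
  hence HK: "(H, K) \<in> O_index G F" unfolding O_index_def using sg orbit_b Fb by blast
  define k where "k = fst (ord (H, K))"
  define d where "d = snd (ord (H, K))"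
  have orbit_d: "is_orbit G H K k d" using ord_orbit HK unfolding k_def d_def by auto
  hence act_d: "acts_on G H {..<k} d" unfolding is_orbit_def fin_hset_iff_acts_on by blast
  from orbit_d obtain f where f: "bij_betw f {..<k} {..<n}" and eq_f: "equivariant H k d b f"
    using is_orbit_iso[OF _ orbit_b] by blast
  define \<phi> where "\<phi> = e \<circ> f"
  have \<phi>: "bij_betw \<phi> {..<k} Ob" unfolding \<phi>_def using f e by (rule bij_betw_trans)
  have \<phi>_eq: "\<phi> (d h j) = a h (\<phi> j)" if "h \<in> H" "j < k" for h j
  proof -
    have "f j < n" using f that(2) by (auto simp: bij_betw_def)
    thus ?thesis using eq_f eq_e that unfolding \<phi>_def equivariant_def by simp
  qed
  define x :: "('g set \<times> 'g set) gtag" where "x = Ex (H, K)"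
  define ts :: "('g set \<times> 'g set, 'g) ftree list" where "ts = map (\<lambda>j. Leaf (\<phi> j)) [0..<k]"
  let ?t = "Node x \<one> id ts"
  have ok: "valid ?t"
    by (rule nodes_ok.node) (use HK in \<open>simp_all add: x_def ts_def k_def permutes_id nodes_ok.leaf\<close>)
  have leaves: "leaves ?t = map \<phi> [0..<k]" by (simp add: ts_def comp_def concat_map_singleton)
  have "ident (tact G h (a h) ?t) ?t" if h: "h \<in> H" for h
  proof -
    have "map (tact G h (a h)) ts = map (\<lambda>j. ts ! tag_perm ord x h j) [0..<length ts]"
    proof (rule nth_equalityI)
      fix j assume "j < length (map (tact G h (a h)) ts)"
      hence j: "j < k" by (simp add: ts_def)
      have "d h j < k" using acts_on_closed[OF act_d h] j by simp
      thus "map (tact G h (a h)) ts ! j = map (\<lambda>j. ts ! tag_perm ord x h j) [0..<length ts] ! j"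
        using \<phi>_eq[OF h j] j by (simp add: ts_def x_def k_def d_def)
    qed (simp add: ts_def)
    thus ?thesis
      using ident_Node_perm_inputs[OF ok, of h] subgroup.mem_carrier[OF sg h] h unfolding x_def by simp
  qed
  moreover have "distinct (leaves ?t)" "set (leaves ?t) = Ob"
    using \<phi> unfolding leaves by (auto simp: bij_betw_def distinct_map atLeast0LessThan)
  ultimately show ?thesis using ok unfolding fixed_tree_def by blast
qed

lemma in_F_imp_fixed_tree:
  assumes L: "in_F F H L a"
  shows "\<exists>t. fixed_tree H a L t"
proof -
  note act = in_F_acts_on[OF L]
  have sg: "subgroup H G" using act by (rule acts_on_subgroup)
  show ?thesis
  proof (rule invariant_subset_induct[OF act in_F_finite[OF L] subset_refl])
    show "\<forall>h\<in>H. \<forall>x\<in>L. a h x \<in> L" using acts_on_closed[OF act] by blast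
    show "\<exists>t. fixed_tree H a {} t" using fixed_tree_empty[OF sg] by blast
  next
    fix j assume j: "j \<in> L"
    show "\<exists>t. fixed_tree H a (orbit H a j) t"
    proof (cases "{h \<in> H. a h j = j} = H")
      case True
      hence "orbit H a j = {j}" using in_orbit[OF act j] unfolding orbit_def by auto
      moreover have "\<forall>h\<in>H. a h j = j" using True by blast
      hence "\<forall>h\<in>H. ident (tact G h (a h) (Leaf j)) (Leaf j)" by (simp add: feq.refl)
      ultimately have "fixed_tree H a (orbit H a j) (Leaf j)" unfolding fixed_tree_def by (simp add: nodes_ok.leaf)
      thus ?thesis ..
    next
      case False
      have "in_F F H (orbit H a j) a"
        using in_F_subset[OF L orbit_subset[OF act j]] orbit_invariant[OF act j] by blast
      thus ?thesis using fixed_tree_orbit in_orbit[OF act j] False unfolding orbit_def by blast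
    qed
  next
    fix A B assume "A \<inter> B = {}" "\<exists>t. fixed_tree H a A t" "\<exists>t. fixed_tree H a B t"
    thus "\<exists>t. fixed_tree H a (A \<union> B) t" using fixed_tree_union sg by blast
  qed
qed

end

theorem proposition4p9:
  fixes G :: "'g monoid"
    and F :: "'g set \<Rightarrow> nat \<Rightarrow> ('g \<Rightarrow> nat \<Rightarrow> nat) \<Rightarrow> bool"
    and ord :: "'g set \<times> 'g set \<Rightarrow> nat \<times> ('g \<Rightarrow> nat \<Rightarrow> nat)"
  assumes "group G" and "finite (carrier G)"
    and "indexing_system G F"
    and "\<forall>HK \<in> O_index G F. is_orbit G (fst HK) (snd HK) (fst (ord HK)) (snd (ord HK))"
  shows "\<forall>H n a. subgroup H G \<longrightarrow> fin_hset G H n a \<longrightarrow>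
           (SM_admissible G (O_index G F) fst ord H n a \<longleftrightarrow> F H n a)"
proof (intro allI impI)
  interpret SM_setting G F ord
    using assms(1,3,4)
    unfolding SM_setting_def SM_setting_axioms_def idx_system_def idx_system_axioms_def by blast
  fix H n a assume fin: "fin_hset G H n a"
  have "SM_admissible G (O_index G F) fst ord H n a \<longleftrightarrow> (\<exists>t. fixed_tree H a {..<n} t)"
    unfolding SM_admissible_def wf_tree_def fixed_tree_def by blast
  also have "\<dots> \<longleftrightarrow> in_F F H {..<n} a"
    using fixed_tree_imp_in_F in_F_imp_fixed_tree fin by (auto simp: fin_hset_iff_acts_on)
  also have "\<dots> \<longleftrightarrow> F H n a" using in_F_iff_F[OF fin] .
  finally show "SM_admissible G (O_index G F) fst ord H n a \<longleftrightarrow> F H n a" .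
qed

end
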